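(* Consider the graph on $\mathbb{Z}$ with $u\sim v$ iff $|u-v|=1$ (unit weights). Let $k$ be a positive odd integer, $S=k\mathbb{Z}$, and $0\le\omega\le\pi$. If $\frac{k+1}{2}\sqrt{2-2\cos\omega}<1$, then for all $f\in PW_\omega$, \[ \frac{1-\frac{k+1}{2}\sqrt{2-2\cos\omega}}{\sqrt k}\|f\|_2\le\|f|_S\|_2\le\frac{1+\frac{k+1}{2}\sqrt{2-2\cos\omega}}{\sqrt k}\|f\|_2. \] Moreover, if $(k+1)\sqrt{2-2\cos\omega}<1$, then the quotient of the upper and lower constants in this estimate is at most $1+2(k+1)\sqrt{2-2\cos\omega}$.
   Context: $\ell^2(\mathbb{Z})$ with $\|f\|_2^2=\sum_{j}|f(j)|^2$ and $\|f|_S\|_2^2=\sum_{j\in S}|f(j)|^2$. The Fourier transform is $\widehat f(\xi)=\sum_{j\in\mathbb{Z}}f(j)e^{-ij\xi}$ on $[-\pi,\pi]$ (extended to $\ell^2$ by Plancherel). $PW_\omega=\{f\in\ell^2(\mathbb{Z}):\widehat f(\xi)=0\text{ for a.e. }\xi\in[-\pi,\pi]\setminus[-\omega,\omega]\}$. *)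

theory Defs
  imports "HOL-Analysis.Analysis"
begin

definition ell2_int :: "(int \<Rightarrow> complex) \<Rightarrow> bool" where
  "ell2_int f \<longleftrightarrow> (\<lambda>j. (cmod (f j))\<^sup>2) summable_on UNIV"

definition l2norm_on :: "int set \<Rightarrow> (int \<Rightarrow> complex) \<Rightarrow> real" where
  "l2norm_on S f = sqrt (infsum (\<lambda>j. (cmod (f j))\<^sup>2) S)"

text \<open>Paley-Wiener space PW_omega: f in l2(Z) whose Fourier transform
  (in the L2 sense, i.e. the L2 function on [-pi,pi] whose Fourier
  coefficients are f) vanishes a.e. outside [-omega,omega].
  With hat f(xi) = sum_j f(j) e^{-ij xi}, we have f(j) = 1/(2 pi) int hat f(xi) e^{ij xi}.\<close>
definition paley_wiener :: "real \<Rightarrow> (int \<Rightarrow> complex) set" where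
  "paley_wiener \<omega> = {f. ell2_int f \<and>
     (\<exists>g :: real \<Rightarrow> complex.
        g \<in> borel_measurable lborel \<and>
        set_integrable lborel {-pi..pi} (\<lambda>\<xi>. (cmod (g \<xi>))\<^sup>2) \<and>
        (AE \<xi> in lborel. \<xi> \<in> {-pi..pi} - {-\<omega>..\<omega>} \<longrightarrow> g \<xi> = 0) \<and>
        (\<forall>j::int. f j = (1 / (2 * complex_of_real pi)) *
            (LINT \<xi>:{-pi..pi}|lborel. g \<xi> * exp (\<i> * of_int j * of_real \<xi>))))}"

end

theory Submission
  imports Defs
begin

lemma norm_diff_le_sum_steps:
  fixes h :: "int \<Rightarrow> 'a::real_normed_vector"
  assumes "0 \<le> d"
  shows "norm (h d - h 0) \<le> (\<Sum>i\<in>{0..<d}. norm (h (i + 1) - h i))"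
  using assms
proof (induction d rule: int_ge_induct)
  case base
  then show ?case by simp
next
  case (step d)
  have "norm (h (d + 1) - h 0) \<le> norm (h (d + 1) - h d) + norm (h d - h 0)"
    using norm_triangle_ineq[of "h (d + 1) - h d" "h d - h 0"] by simp
  also have "\<dots> \<le> norm (h (d + 1) - h d) + (\<Sum>i\<in>{0..<d}. norm (h (i + 1) - h i))"
    using step by simp
  also have "\<dots> = (\<Sum>i\<in>{0..<d + 1}. norm (h (i + 1) - h i))"
  proof -
    have "{0..<d + 1} = insert d {0..<d}" using step(1) by auto
    then show ?thesis by simp
  qed
  finally show ?case .
qed

lemma sum_sq_norm_diff_from_start_le:
  fixes h :: "int \<Rightarrow> 'a::real_normed_vector"
  assumes "0 \<le> R"
  shows "(\<Sum>d\<in>{1..R}. (norm (h d - h 0))\<^sup>2)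
           \<le> (of_int R)\<^sup>2 * (\<Sum>i\<in>{0..<R}. (norm (h (i + 1) - h i))\<^sup>2)"
proof -
  define a where "a i = norm (h (i + 1) - h i)" for i
  have each: "(norm (h d - h 0))\<^sup>2 \<le> (\<Sum>i\<in>{0..<R}. a i)\<^sup>2" if "d \<in> {1..R}" for d
  proof -
    have "norm (h d - h 0) \<le> (\<Sum>i\<in>{0..<d}. a i)"
      using norm_diff_le_sum_steps[of d h] that unfolding a_def by simp
    also have "\<dots> \<le> (\<Sum>i\<in>{0..<R}. a i)"
      using that by (intro sum_mono2) (auto simp: a_def)
    finally show ?thesis by (simp add: power_mono)
  qed
  have "(\<Sum>d\<in>{1..R}. (norm (h d - h 0))\<^sup>2) \<le> (\<Sum>d\<in>{1..R}. (\<Sum>i\<in>{0..<R}. a i)\<^sup>2)"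
    by (rule sum_mono) (rule each)
  also have "\<dots> = of_int R * (\<Sum>i\<in>{0..<R}. a i)\<^sup>2"
    using assms by simp
  also have "\<dots> \<le> of_int R * (of_int R * (\<Sum>i\<in>{0..<R}. (a i)\<^sup>2))"
    using Cauchy_Schwarz_ineq_sum[of a "\<lambda>_. 1" "{0..<R}"] assms
    by (intro mult_left_mono) (simp_all add: mult.commute)
  finally show ?thesis by (simp add: a_def power2_eq_square mult.assoc)
qed

text \<open>The factor \<open>R\<^sup>2\<close> rather than \<open>R (2R + 1)\<close> is what the final constant \<open>(k + 1)/2\<close> needs:
  each half of the block is bounded separately, by the steps on its own side of the centre.\<close>
lemma sum_sq_norm_diff_from_centre_le:
  fixes f :: "int \<Rightarrow> 'a::real_normed_vector"
  assumes R: "0 \<le> R"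
  shows "(\<Sum>d\<in>{-R..R}. (norm (f (c + d) - f c))\<^sup>2)
           \<le> (of_int R)\<^sup>2 * (\<Sum>j\<in>{-R..<R}. (norm (f (c + j + 1) - f (c + j)))\<^sup>2)"
proof -
  define G where "G d = (norm (f (c + d) - f c))\<^sup>2" for d
  define H where "H j = (norm (f (c + j + 1) - f (c + j)))\<^sup>2" for j
  have block: "{-R..R} = insert 0 ({1..R} \<union> uminus ` {1..R})"
  proof (intro set_eqI iffI)
    show "x \<in> insert 0 ({1..R} \<union> uminus ` {1..R})" if "x \<in> {-R..R}" for x
      using that by (cases "x < 0") (auto intro!: image_eqI[where x="-x"])
  qed (use R in auto)
  have edges: "{-R..<R} = {0..<R} \<union> (\<lambda>i. - i - 1) ` {0..<R}"
  proof (intro set_eqI iffI)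
    show "x \<in> {0..<R} \<union> (\<lambda>i. - i - 1) ` {0..<R}" if "x \<in> {-R..<R}" for x
      using that by (cases "x < 0") (auto intro!: image_eqI[where x="-x-1"])
  qed (use R in auto)
  have "(\<Sum>d\<in>{-R..R}. G d) = (\<Sum>d\<in>{1..R}. G d) + (\<Sum>d\<in>{1..R}. G (- d))"
  proof -
    have "(\<Sum>d\<in>uminus ` {1..R}. G d) = (\<Sum>d\<in>{1..R}. G (- d))"
      by (subst sum.reindex) (auto simp: inj_on_def)
    moreover have "(\<Sum>d\<in>{-R..R}. G d) = (\<Sum>d\<in>{1..R}. G d) + (\<Sum>d\<in>uminus ` {1..R}. G d)"
      unfolding block by (subst sum.insert) (auto simp: G_def intro: sum.union_disjoint)
    ultimately show ?thesis by simp
  qed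
  also have "\<dots> \<le> (of_int R)\<^sup>2 * (\<Sum>i\<in>{0..<R}. H i) + (of_int R)\<^sup>2 * (\<Sum>i\<in>{0..<R}. H (- i - 1))"
    using sum_sq_norm_diff_from_start_le[OF R, of "\<lambda>d. f (c + d)"]
      sum_sq_norm_diff_from_start_le[OF R, of "\<lambda>d. f (c - d)"]
    by (intro add_mono) (simp_all add: G_def H_def norm_minus_commute algebra_simps)
  also have "\<dots> = (of_int R)\<^sup>2 * (\<Sum>j\<in>{-R..<R}. H j)"
    unfolding edges by (subst sum.union_disjoint) (auto simp: sum.reindex inj_on_def distrib_left)
  finally show ?thesis by (simp add: G_def H_def)
qed

lemma bij_betw_block_decomposition:
  fixes k R :: int
  assumes "k = 2 * R + 1" "0 \<le> R"
  shows "bij_betw (\<lambda>(m, d). k * m + d) (UNIV \<times> {-R..R}) UNIV"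
proof (rule bij_betw_byWitness[where f' = "\<lambda>j. ((j + R) div k, (j + R) mod k - R)"])
  have k: "0 < k" using assms by simp
  have "(k * m + d + R) div k = m \<and> (k * m + d + R) mod k = d + R" if "d \<in> {-R..R}" for m d
  proof -
    have "(d + R) div k = 0" "(d + R) mod k = d + R"
      using that assms by (simp_all add: div_pos_pos_trivial mod_pos_pos_trivial)
    then show ?thesis using k by (simp add: add.assoc)
  qed
  then show "\<forall>p\<in>UNIV \<times> {-R..R}. (\<lambda>j. ((j + R) div k, (j + R) mod k - R)) ((\<lambda>(m, d). k * m + d) p) = p"
    by auto
  show "\<forall>j\<in>UNIV. (\<lambda>(m, d). k * m + d) ((\<lambda>j. ((j + R) div k, (j + R) mod k - R)) j) = j"
    using mult_div_mod_eq[of k] by (simp add: algebra_simps)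
  show "(\<lambda>j. ((j + R) div k, (j + R) mod k - R)) ` UNIV \<subseteq> UNIV \<times> {-R..R}"
  proof (intro subsetI)
    fix p assume "p \<in> (\<lambda>j. ((j + R) div k, (j + R) mod k - R)) ` UNIV"
    then obtain j where p: "p = ((j + R) div k, (j + R) mod k - R)" by blast
    have "0 \<le> (j + R) mod k" "(j + R) mod k < k"
      using k by simp_all
    then show "p \<in> UNIV \<times> {-R..R}" using p assms(1) by simp
  qed
qed simp

lemma L2_set_norm_diff:
  fixes u v :: "'i \<Rightarrow> 'a::real_normed_vector"
  shows "\<bar>L2_set (\<lambda>i. norm (u i)) A - L2_set (\<lambda>i. norm (v i)) A\<bar> \<le> L2_set (\<lambda>i. norm (u i - v i)) A"
proof -
  have "L2_set (\<lambda>i. norm (u i)) A \<le> L2_set (\<lambda>i. norm (v i) + norm (u i - v i)) A"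
    by (rule L2_set_mono) (auto intro: norm_triangle_sub)
  moreover have "L2_set (\<lambda>i. norm (v i)) A \<le> L2_set (\<lambda>i. norm (u i) + norm (u i - v i)) A"
    by (rule L2_set_mono) (auto simp: norm_minus_commute[of "u _"] intro: norm_triangle_sub)
  ultimately show ?thesis
    using L2_set_triangle_ineq[of "\<lambda>i. norm (v i)" "\<lambda>i. norm (u i - v i)" A]
      L2_set_triangle_ineq[of "\<lambda>i. norm (u i)" "\<lambda>i. norm (u i - v i)" A] by linarith
qed

lemma L2_set_reindex: "inj_on h A \<Longrightarrow> L2_set g (h ` A) = L2_set (\<lambda>x. g (h x)) A"
  unfolding L2_set_def by (simp add: sum.reindex)

lemma sampling_on_blocks:
  fixes f :: "int \<Rightarrow> 'a::real_normed_vector" and k R :: int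
  assumes k: "k = 2 * R + 1" "0 \<le> R" and M: "finite M"
  shows "\<bar>L2_set (\<lambda>j. norm (f j)) ((\<lambda>(m, d). k * m + d) ` (M \<times> {-R..R}))
            - sqrt k * L2_set (\<lambda>m. norm (f (k * m))) M\<bar>
         \<le> R * L2_set (\<lambda>j. norm (f (j + 1) - f j)) ((\<lambda>(m, d). k * m + d) ` (M \<times> {-R..<R}))"
proof -
  define \<phi> where "\<phi> = (\<lambda>(m, d). k * m + d)"
  have inj: "inj_on \<phi> (M \<times> D)" if "D \<subseteq> {-R..R}" for D
    using bij_betw_imp_inj_on[OF bij_betw_block_decomposition[OF k]] that
    unfolding \<phi>_def by (elim inj_on_subset) auto
  have "L2_set (\<lambda>j. norm (f j)) (\<phi> ` (M \<times> {-R..R})) = L2_set (\<lambda>p. norm (f (\<phi> p))) (M \<times> {-R..R})"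
    by (rule L2_set_reindex[OF inj]) simp
  moreover have "sqrt k * L2_set (\<lambda>m. norm (f (k * m))) M = L2_set (\<lambda>p. norm (f (k * fst p))) (M \<times> {-R..R})"
  proof -
    have "(\<Sum>p\<in>M \<times> {-R..R}. (norm (f (k * fst p)))\<^sup>2) = k * (\<Sum>m\<in>M. (norm (f (k * m)))\<^sup>2)"
      using k by (simp add: sum.cartesian_product' sum_distrib_left)
    then show ?thesis unfolding L2_set_def by (simp add: real_sqrt_mult)
  qed
  moreover have "L2_set (\<lambda>p. norm (f (\<phi> p) - f (k * fst p))) (M \<times> {-R..R})
                   \<le> R * L2_set (\<lambda>j. norm (f (j + 1) - f j)) (\<phi> ` (M \<times> {-R..<R}))"
  unfolding L2_set_def[of _ "M \<times> {-R..R}"]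
  proof (rule real_le_lsqrt)
    have "(\<Sum>p\<in>M \<times> {-R..R}. (norm (f (\<phi> p) - f (k * fst p)))\<^sup>2)
            = (\<Sum>m\<in>M. \<Sum>d\<in>{-R..R}. (norm (f (k * m + d) - f (k * m)))\<^sup>2)"
      by (simp add: sum.cartesian_product' \<phi>_def)
    also have "\<dots> \<le> (\<Sum>m\<in>M. (of_int R)\<^sup>2 * (\<Sum>j\<in>{-R..<R}. (norm (f (k * m + j + 1) - f (k * m + j)))\<^sup>2))"
      by (intro sum_mono sum_sq_norm_diff_from_centre_le k(2))
    also have "\<dots> = (of_int R)\<^sup>2 * (\<Sum>p\<in>M \<times> {-R..<R}. (norm (f (\<phi> p + 1) - f (\<phi> p)))\<^sup>2)"
      by (simp add: sum.cartesian_product' \<phi>_def sum_distrib_left add.assoc)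
    also have "\<dots> = (R * L2_set (\<lambda>j. norm (f (j + 1) - f j)) (\<phi> ` (M \<times> {-R..<R})))\<^sup>2"
    proof -
      have "inj_on \<phi> (M \<times> {-R..<R})" by (rule inj) auto
      then show ?thesis by (simp add: power_mult_distrib L2_set_def sum_nonneg sum.reindex)
    qed
    finally show "(\<Sum>p\<in>M \<times> {-R..R}. (norm (f (\<phi> p) - f (k * fst p)))\<^sup>2)
                    \<le> (R * L2_set (\<lambda>j. norm (f (j + 1) - f j)) (\<phi> ` (M \<times> {-R..<R})))\<^sup>2" .
  qed (use k in simp)
  ultimately show ?thesis
    using L2_set_norm_diff[where u="\<lambda>p. f (\<phi> p)" and v="\<lambda>p. f (k * fst p)" and A="M \<times> {-R..R}"]
    unfolding \<phi>_def by linarith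
qed

lemma L2_set_le_sqrt_infsum:
  fixes g :: "'i \<Rightarrow> real"
  assumes "(\<lambda>i. (g i)\<^sup>2) summable_on A" "finite F" "F \<subseteq> A"
  shows "L2_set g F \<le> sqrt (infsum (\<lambda>i. (g i)\<^sup>2) A)"
  unfolding L2_set_def using finite_sum_le_infsum[OF assms] by simp

lemma sqrt_infsum_le_if_L2_set_le:
  fixes g :: "'i \<Rightarrow> real"
  assumes "(\<lambda>i. (g i)\<^sup>2) summable_on A" "0 \<le> B" "\<And>F. finite F \<Longrightarrow> F \<subseteq> A \<Longrightarrow> L2_set g F \<le> B"
  shows "sqrt (infsum (\<lambda>i. (g i)\<^sup>2) A) \<le> B"
proof (rule real_le_lsqrt[OF assms(2)], rule infsum_le_finite_sums[OF assms(1)])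
  fix F assume "finite F" "F \<subseteq> A"
  then have "sqrt (\<Sum>i\<in>F. (g i)\<^sup>2) \<le> B" using assms(3) unfolding L2_set_def by blast
  then show "(\<Sum>i\<in>F. (g i)\<^sup>2) \<le> B\<^sup>2" by (rule sqrt_le_D)
qed

theorem sampling_estimate:
  fixes f :: "int \<Rightarrow> complex" and k R :: int
  assumes summable: "(\<lambda>j. (cmod (f j))\<^sup>2) summable_on UNIV" and k: "k = 2 * R + 1" "0 \<le> R"
    and steps: "\<And>F. finite F \<Longrightarrow> (\<Sum>j\<in>F. (cmod (f (j + 1) - f j))\<^sup>2) \<le> D"
  shows "\<bar>sqrt k * l2norm_on (range (\<lambda>m. k * m)) f - l2norm_on UNIV f\<bar> \<le> R * sqrt D"
proof -
  define \<phi> where "\<phi> = (\<lambda>(m, d). k * m + d)"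
  define N where "N = l2norm_on UNIV f"
  define NS where "NS = l2norm_on (range (\<lambda>m. k * m)) f"
  have inj_mult: "inj (\<lambda>m. k * m)" using k by (simp add: inj_on_def)
  have summable_samples: "(\<lambda>m. (cmod (f (k * m)))\<^sup>2) summable_on UNIV"
    using summable_on_subset_banach[OF summable, of "range (\<lambda>m. k * m)"]
    by (simp add: summable_on_reindex[OF inj_mult] comp_def)
  have NS_samples: "NS = sqrt (infsum (\<lambda>m. (cmod (f (k * m)))\<^sup>2) UNIV)"
    unfolding NS_def l2norm_on_def by (simp add: infsum_reindex[OF inj_mult] comp_def)
  have "0 \<le> D" using steps[of "{}"] by simp
  have "0 \<le> N" "0 \<le> NS" unfolding N_def NS_samples l2norm_on_def by (simp_all add: infsum_nonneg)
  have blocks: "\<bar>L2_set (\<lambda>j. cmod (f j)) (\<phi> ` (M \<times> {-R..R})) - sqrt k * L2_set (\<lambda>m. cmod (f (k * m))) M\<bar>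
                  \<le> R * sqrt D" if "finite M" for M
  proof -
    have "L2_set (\<lambda>j. cmod (f (j + 1) - f j)) (\<phi> ` (M \<times> {-R..<R})) \<le> sqrt D"
      unfolding L2_set_def using steps \<open>finite M\<close> by simp
    then show ?thesis
      using sampling_on_blocks[OF k \<open>finite M\<close>, of f] k(2) unfolding \<phi>_def
      by (smt (verit, best) mult_left_mono of_int_nonneg)
  qed
  have "N \<le> sqrt k * NS + R * sqrt D"
    unfolding N_def l2norm_on_def
  proof (rule sqrt_infsum_le_if_L2_set_le[OF summable])
    show "0 \<le> sqrt k * NS + R * sqrt D"
      using k \<open>0 \<le> D\<close> \<open>0 \<le> NS\<close> by simp
    fix F :: "int set" assume "finite F"
    have bij: "bij_betw \<phi> (UNIV \<times> {-R..R}) UNIV"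
      unfolding \<phi>_def by (rule bij_betw_block_decomposition[OF k])
    define M where "M = fst ` inv_into (UNIV \<times> {-R..R}) \<phi> ` F"
    have "F \<subseteq> \<phi> ` (M \<times> {-R..R})"
    proof
      fix j assume "j \<in> F"
      define p where "p = inv_into (UNIV \<times> {-R..R}) \<phi> j"
      have "p \<in> UNIV \<times> {-R..R}" "\<phi> p = j"
        using bij_betw_inv_into_left bij bij_betw_imp_surj_on inv_into_into f_inv_into_f
        unfolding p_def by (metis UNIV_I)+
      moreover have "fst p \<in> M" using \<open>j \<in> F\<close> unfolding M_def p_def by blast
      ultimately show "j \<in> \<phi> ` (M \<times> {-R..R})" by (auto intro: image_eqI[where x=p])
    qed
    moreover have "finite M" using \<open>finite F\<close> by (simp add: M_def)
    ultimately have "L2_set (\<lambda>j. cmod (f j)) F \<le> L2_set (\<lambda>j. cmod (f j)) (\<phi> ` (M \<times> {-R..R}))"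
      unfolding L2_set_def by (intro real_sqrt_le_mono sum_mono2) auto
    also have "\<dots> \<le> sqrt k * L2_set (\<lambda>m. cmod (f (k * m))) M + R * sqrt D"
      using blocks[OF \<open>finite M\<close>] by linarith
    also have "\<dots> \<le> sqrt k * NS + R * sqrt D"
      unfolding NS_samples using L2_set_le_sqrt_infsum[OF summable_samples \<open>finite M\<close>]
      using k by (intro add_right_mono mult_left_mono) simp_all
    finally show "L2_set (\<lambda>j. cmod (f j)) F \<le> sqrt k * NS + R * sqrt D" .
  qed
  moreover have "NS \<le> (N + R * sqrt D) / sqrt k"
    unfolding NS_samples
  proof (rule sqrt_infsum_le_if_L2_set_le[OF summable_samples])
    show "0 \<le> (N + R * sqrt D) / sqrt k"
      using k \<open>0 \<le> D\<close> \<open>0 \<le> N\<close> by simp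
    fix M :: "int set" assume "finite M"
    have "L2_set (\<lambda>j. cmod (f j)) (\<phi> ` (M \<times> {-R..R})) \<le> N"
      unfolding N_def l2norm_on_def using \<open>finite M\<close>
      by (intro L2_set_le_sqrt_infsum[OF summable]) auto
    then have "sqrt k * L2_set (\<lambda>m. cmod (f (k * m))) M \<le> N + R * sqrt D"
      using blocks[OF \<open>finite M\<close>] by linarith
    then show "L2_set (\<lambda>m. cmod (f (k * m))) M \<le> (N + R * sqrt D) / sqrt k"
      using k by (simp add: field_simps)
  qed
  then have "sqrt k * NS \<le> N + R * sqrt D"
    using k by (simp add: field_simps)
  ultimately show ?thesis unfolding N_def NS_def by linarith
qed

definition Mpi :: "real measure" where
  "Mpi = restrict_space lborel {-pi..pi}"

definition square_integrable :: "(real \<Rightarrow> complex) \<Rightarrow> bool" where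
  "square_integrable h \<longleftrightarrow> h \<in> borel_measurable Mpi \<and> integrable Mpi (\<lambda>x. (cmod (h x))\<^sup>2)"

text \<open>Inner product and norm are normalised by \<open>1/(2\<pi>)\<close>, so that the exponentials below are
  orthonormal and the Fourier coefficients of the function \<open>g\<close> in the definition of
  \<^const>\<open>paley_wiener\<close> are exactly the values of \<open>f\<close>.\<close>
definition L2_inner :: "(real \<Rightarrow> complex) \<Rightarrow> (real \<Rightarrow> complex) \<Rightarrow> complex" where
  "L2_inner u v = (LINT x|Mpi. u x * cnj (v x)) / of_real (2 * pi)"

definition L2_norm :: "(real \<Rightarrow> complex) \<Rightarrow> real" where
  "L2_norm u = sqrt ((LINT x|Mpi. (cmod (u x))\<^sup>2) / (2 * pi))"

lemma sets_Icc_pi: "{-pi..pi} \<inter> space lborel \<in> sets lborel"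
  by simp

lemma space_Mpi [simp]: "space Mpi = {-pi..pi}"
  by (simp add: Mpi_def space_restrict_space)

lemma measure_Mpi: "A \<in> sets borel \<Longrightarrow> A \<subseteq> {-pi..pi} \<Longrightarrow> measure Mpi A = measure lborel A"
  unfolding Mpi_def by (rule measure_restrict_space[OF sets_Icc_pi]) simp_all

lemma finite_measure_Mpi: "finite_measure Mpi"
  by (rule finite_measureI) (simp add: Mpi_def emeasure_restrict_space)

lemma measurable_Mpi [measurable (raw)]: "f \<in> borel_measurable lborel \<Longrightarrow> f \<in> borel_measurable Mpi"
  unfolding Mpi_def by (rule measurable_restrict_space1)

lemma integral_Mpi_eq_set_integral:
  fixes h :: "real \<Rightarrow> 'a::{banach, second_countable_topology}"
  shows "integral\<^sup>L Mpi h = (LINT x:{-pi..pi}|lborel. h x)"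
  unfolding Mpi_def set_lebesgue_integral_def by (rule integral_restrict_space[OF sets_Icc_pi])

lemma integrable_Mpi_iff:
  fixes h :: "real \<Rightarrow> 'a::{banach, second_countable_topology}"
  shows "integrable Mpi h \<longleftrightarrow> set_integrable lborel {-pi..pi} h"
  unfolding Mpi_def set_integrable_def by (rule integrable_restrict_space[OF sets_Icc_pi])

lemma AE_Mpi_iff: "(AE x in Mpi. P x) \<longleftrightarrow> (AE x in lborel. x \<in> {-pi..pi} \<longrightarrow> P x)"
  unfolding Mpi_def by (rule AE_restrict_space_iff[OF sets_Icc_pi])

lemma borel_measurable_cnj [measurable]:
  "f \<in> borel_measurable M \<Longrightarrow> (\<lambda>x. cnj (f x)) \<in> borel_measurable M"
  by (rule borel_measurable_continuous_on[where f=cnj]) (auto intro: continuous_on_cnj continuous_on_id)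

lemma square_integrable_bounded:
  assumes "h \<in> borel_measurable Mpi" "\<And>x. x \<in> {-pi..pi} \<Longrightarrow> cmod (h x) \<le> B"
  shows "square_integrable h"
  unfolding square_integrable_def
proof (intro conjI assms(1) finite_measure.integrable_const_bound[OF finite_measure_Mpi])
  show "AE x in Mpi. norm ((cmod (h x))\<^sup>2) \<le> B\<^sup>2"
    using assms(2) by (intro AE_I2) (auto intro: power_mono)
qed (use assms(1) in measurable)

lemma square_integrable_measurable [measurable_dest]:
  "square_integrable h \<Longrightarrow> h \<in> borel_measurable Mpi"
  by (simp add: square_integrable_def)

lemma square_integrable_integrable:
  "square_integrable h \<Longrightarrow> integrable Mpi (\<lambda>x. (cmod (h x))\<^sup>2)"
  by (simp add: square_integrable_def)

lemma square_integrable_bounded_mult: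
  assumes h: "square_integrable h" and m: "m \<in> borel_measurable Mpi"
    and B: "\<And>x. x \<in> {-pi..pi} \<Longrightarrow> cmod (m x) \<le> B"
  shows "square_integrable (\<lambda>x. m x * h x)"
  unfolding square_integrable_def
proof
  show "(\<lambda>x. m x * h x) \<in> borel_measurable Mpi" using h m by measurable
  have "integrable Mpi (\<lambda>x. B\<^sup>2 * (cmod (h x))\<^sup>2)"
    using h by (intro integrable_mult_right square_integrable_integrable)
  then show "integrable Mpi (\<lambda>x. (cmod (m x * h x))\<^sup>2)"
  proof (rule Bochner_Integration.integrable_bound)
    show "AE x in Mpi. norm ((cmod (m x * h x))\<^sup>2) \<le> norm (B\<^sup>2 * (cmod (h x))\<^sup>2)"
      using B by (intro AE_I2) (auto simp: norm_mult power_mult_distrib intro!: mult_right_mono power_mono)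
  qed (use h m in measurable)
qed

lemma square_integrable_cmult: "square_integrable h \<Longrightarrow> square_integrable (\<lambda>x. c * h x)"
  by (rule square_integrable_bounded_mult[where B="cmod c"]) simp_all

lemma square_integrable_add:
  assumes u: "square_integrable u" and v: "square_integrable v"
  shows "square_integrable (\<lambda>x. u x + v x)"
  unfolding square_integrable_def
proof
  show "(\<lambda>x. u x + v x) \<in> borel_measurable Mpi" using u v by measurable
  have "integrable Mpi (\<lambda>x. 2 * (cmod (u x))\<^sup>2 + 2 * (cmod (v x))\<^sup>2)"
    using u v by (intro Bochner_Integration.integrable_add integrable_mult_right square_integrable_integrable)
  then show "integrable Mpi (\<lambda>x. (cmod (u x + v x))\<^sup>2)"
  proof (rule Bochner_Integration.integrable_bound)
    have "(cmod (u x + v x))\<^sup>2 \<le> 2 * (cmod (u x))\<^sup>2 + 2 * (cmod (v x))\<^sup>2" for x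
    proof -
      have "(cmod (u x + v x))\<^sup>2 \<le> (cmod (u x) + cmod (v x))\<^sup>2"
        by (intro power_mono norm_triangle_ineq) simp
      then show ?thesis
        using sum_squares_bound[of "cmod (u x)" "cmod (v x)"] unfolding power2_sum by linarith
    qed
    then show "AE x in Mpi. norm ((cmod (u x + v x))\<^sup>2) \<le> norm (2 * (cmod (u x))\<^sup>2 + 2 * (cmod (v x))\<^sup>2)"
      by (intro AE_I2) simp
  qed (use u v in measurable)
qed

lemma square_integrable_diff:
  "square_integrable u \<Longrightarrow> square_integrable v \<Longrightarrow> square_integrable (\<lambda>x. u x - v x)"
  using square_integrable_add[of u "\<lambda>x. -1 * v x"] square_integrable_cmult[of v "-1"] by simp

lemma square_integrable_sum:
  "(\<And>y. y \<in> S \<Longrightarrow> square_integrable (g y)) \<Longrightarrow> square_integrable (\<lambda>x. \<Sum>y\<in>S. g y x)"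
proof (induction S rule: infinite_finite_induct)
  case (infinite S)
  then show ?case by (simp add: square_integrable_bounded[where B=0])
next
  case empty
  then show ?case by (simp add: square_integrable_bounded[where B=0])
next
  case (insert y S)
  then show ?case by (simp add: square_integrable_add)
qed

lemma integrable_mult_cnj:
  assumes u: "square_integrable u" and v: "square_integrable v"
  shows "integrable Mpi (\<lambda>x. u x * cnj (v x))"
proof -
  have "integrable Mpi (\<lambda>x. (cmod (u x))\<^sup>2 + (cmod (v x))\<^sup>2)"
    using u v by (intro Bochner_Integration.integrable_add square_integrable_integrable)
  then show ?thesis
  proof (rule Bochner_Integration.integrable_bound)
    have "cmod (u x) * cmod (v x) \<le> (cmod (u x))\<^sup>2 + (cmod (v x))\<^sup>2" for x
      using sum_squares_bound[of "cmod (u x)" "cmod (v x)"]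
        mult_nonneg_nonneg[OF norm_ge_zero norm_ge_zero, of "u x" "v x"] by linarith
    then show "AE x in Mpi. norm (u x * cnj (v x)) \<le> norm ((cmod (u x))\<^sup>2 + (cmod (v x))\<^sup>2)"
      by (intro AE_I2) (simp add: norm_mult)
  qed (use u v in measurable)
qed

lemma L2_inner_add_left:
  assumes "square_integrable u" "square_integrable v" "square_integrable w"
  shows "L2_inner (\<lambda>x. u x + v x) w = L2_inner u w + L2_inner v w"
  unfolding L2_inner_def using integrable_mult_cnj[OF assms(1,3)] integrable_mult_cnj[OF assms(2,3)]
  by (simp add: distrib_right add_divide_distrib)

lemma L2_inner_diff_left:
  assumes "square_integrable u" "square_integrable v" "square_integrable w"
  shows "L2_inner (\<lambda>x. u x - v x) w = L2_inner u w - L2_inner v w"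
  unfolding L2_inner_def using integrable_mult_cnj[OF assms(1,3)] integrable_mult_cnj[OF assms(2,3)]
  by (simp add: left_diff_distrib diff_divide_distrib)

lemma L2_norm_nonneg: "0 \<le> L2_norm u"
  unfolding L2_norm_def by simp

lemma L2_norm_square: "(L2_norm u)\<^sup>2 = (LINT x|Mpi. (cmod (u x))\<^sup>2) / (2 * pi)"
  unfolding L2_norm_def by simp

lemma L2_inner_self: "L2_inner u u = of_real ((L2_norm u)\<^sup>2)"
proof -
  have "(\<lambda>x. u x * cnj (u x)) = (\<lambda>x. of_real ((cmod (u x))\<^sup>2))"
    by (intro ext) (rule complex_norm_square[symmetric])
  then show ?thesis
    unfolding L2_inner_def L2_norm_square by (simp only: integral_complex_of_real) simp
qed

lemma L2_norm_cmult: "L2_norm (\<lambda>x. c * u x) = cmod c * L2_norm u"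
proof -
  have "(LINT x|Mpi. (cmod (c * u x))\<^sup>2) = (cmod c)\<^sup>2 * (LINT x|Mpi. (cmod (u x))\<^sup>2)"
    by (simp add: norm_mult power_mult_distrib)
  then show ?thesis unfolding L2_norm_def by (simp add: real_sqrt_mult real_sqrt_divide)
qed

lemma L2_norm_le_bound:
  assumes "square_integrable h" "0 \<le> B" "\<And>x. x \<in> {-pi..pi} \<Longrightarrow> cmod (h x) \<le> B"
  shows "L2_norm h \<le> B"
proof -
  have "(LINT x|Mpi. (cmod (h x))\<^sup>2) \<le> (LINT x|Mpi. B\<^sup>2)"
    using assms by (intro integral_mono square_integrable_integrable
        finite_measure.integrable_const[OF finite_measure_Mpi]) (auto intro: power_mono)
  also have "\<dots> = 2 * pi * B\<^sup>2"
    using measure_Mpi[of "{-pi..pi}"] by simp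
  finally show ?thesis
    unfolding L2_norm_def using assms(2) by (intro real_le_lsqrt) (simp_all add: pos_divide_le_eq mult.commute)
qed

theorem L2_Cauchy_Schwarz:
  assumes u: "square_integrable u" and v: "square_integrable v"
  shows "cmod (L2_inner u v) \<le> L2_norm u * L2_norm v"
proof -
  have [measurable]: "u \<in> borel_measurable Mpi" "v \<in> borel_measurable Mpi"
    using u v by (simp_all add: square_integrable_def)
  have integrable: "integrable Mpi (\<lambda>x. cmod (u x) * cmod (v x))"
    using integrable_norm[OF integrable_mult_cnj[OF u v]] by (simp add: norm_mult)
  have nn_sq: "(\<integral>\<^sup>+x. ennreal (cmod (h x)) ^ 2 \<partial>Mpi) = ennreal (LINT x|Mpi. (cmod (h x))\<^sup>2)"
    if "square_integrable h" for h
    using nn_integral_eq_integral[OF square_integrable_integrable[OF that]] by (simp add: ennreal_power)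
  define I where "I = (LINT x|Mpi. cmod (u x) * cmod (v x))"
  have "0 \<le> I" by (simp add: I_def)
  have "(\<integral>\<^sup>+x. ennreal (cmod (u x)) * ennreal (cmod (v x)) \<partial>Mpi)\<^sup>2
          \<le> (\<integral>\<^sup>+x. ennreal (cmod (u x)) ^ 2 \<partial>Mpi) * (\<integral>\<^sup>+x. ennreal (cmod (v x)) ^ 2 \<partial>Mpi)"
    by (rule Cauchy_Schwarz_nn_integral) measurable
  also have "(\<integral>\<^sup>+x. ennreal (cmod (u x)) * ennreal (cmod (v x)) \<partial>Mpi) = ennreal I"
    using nn_integral_eq_integral[OF integrable] by (simp add: I_def ennreal_mult)
  finally have "ennreal (I\<^sup>2) \<le> ennreal ((LINT x|Mpi. (cmod (u x))\<^sup>2) * (LINT x|Mpi. (cmod (v x))\<^sup>2))"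
    unfolding nn_sq[OF u] nn_sq[OF v] ennreal_power[OF \<open>0 \<le> I\<close>, symmetric]
    by (simp add: ennreal_mult)
  then have "I\<^sup>2 \<le> (LINT x|Mpi. (cmod (u x))\<^sup>2) * (LINT x|Mpi. (cmod (v x))\<^sup>2)"
    by (simp add: ennreal_le_iff)
  then have "I \<le> sqrt ((LINT x|Mpi. (cmod (u x))\<^sup>2) * (LINT x|Mpi. (cmod (v x))\<^sup>2))"
    by (rule real_le_rsqrt)
  moreover have "cmod (LINT x|Mpi. u x * cnj (v x)) \<le> I"
    using integral_norm_bound[of Mpi "\<lambda>x. u x * cnj (v x)"] by (simp add: I_def norm_mult)
  ultimately have "cmod (LINT x|Mpi. u x * cnj (v x)) / (2 * pi)
      \<le> sqrt ((LINT x|Mpi. (cmod (u x))\<^sup>2) * (LINT x|Mpi. (cmod (v x))\<^sup>2)) / (2 * pi)"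
    using pi_gt_zero by (intro divide_right_mono) linarith+
  moreover have "sqrt (2 * pi) * sqrt (2 * pi) = 2 * pi" by simp
  ultimately show ?thesis
    unfolding L2_inner_def L2_norm_def norm_divide norm_of_real
    by (simp add: real_sqrt_divide real_sqrt_mult)
qed

theorem L2_norm_triangle:
  assumes u: "square_integrable u" and v: "square_integrable v"
  shows "L2_norm (\<lambda>x. u x + v x) \<le> L2_norm u + L2_norm v"
proof -
  define w where "w = (\<lambda>x. u x + v x)"
  have w: "square_integrable w" unfolding w_def using u v by (rule square_integrable_add)
  have "L2_inner w w = L2_inner u w + L2_inner v w"
    using L2_inner_add_left[OF u v w] by (simp add: w_def)
  then have "(L2_norm w)\<^sup>2 = Re (L2_inner u w + L2_inner v w)"
    by (metis L2_inner_self Re_complex_of_real)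
  also have "\<dots> \<le> cmod (L2_inner u w) + cmod (L2_inner v w)"
    by (simp add: complex_Re_le_cmod add_mono)
  also have "\<dots> \<le> (L2_norm u + L2_norm v) * L2_norm w"
    using L2_Cauchy_Schwarz[OF u w] L2_Cauchy_Schwarz[OF v w] by (simp add: distrib_right)
  finally have "L2_norm w * L2_norm w \<le> (L2_norm u + L2_norm v) * L2_norm w"
    by (simp add: power2_eq_square)
  then have "L2_norm w \<le> L2_norm u + L2_norm v"
    using L2_norm_nonneg[of w] L2_norm_nonneg[of u] L2_norm_nonneg[of v]
    by (cases "L2_norm w = 0") (simp_all add: mult_le_cancel_right)
  then show ?thesis by (simp add: w_def)
qed

lemma L2_norm_triangle_diff:
  assumes "square_integrable u" "square_integrable v" "square_integrable w"
  shows "L2_norm (\<lambda>x. u x - w x) \<le> L2_norm (\<lambda>x. u x - v x) + L2_norm (\<lambda>x. v x - w x)"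
  using L2_norm_triangle[OF square_integrable_diff[OF assms(1,2)] square_integrable_diff[OF assms(2,3)]]
  by simp

definition fourier_basis :: "int \<Rightarrow> real \<Rightarrow> complex" where
  "fourier_basis j x = exp (- (\<i> * of_int j * of_real x))"

definition trig_poly :: "int set \<Rightarrow> (int \<Rightarrow> complex) \<Rightarrow> real \<Rightarrow> complex" where
  "trig_poly F c x = (\<Sum>j\<in>F. c j * fourier_basis j x)"

lemma fourier_basis_measurable [measurable]: "fourier_basis j \<in> borel_measurable Mpi"
  unfolding fourier_basis_def by (intro measurable_Mpi) measurable

lemma norm_fourier_basis [simp]: "cmod (fourier_basis j x) = 1"
  by (simp add: fourier_basis_def norm_exp_eq_Re)

lemma fourier_basis_mult_cnj: "fourier_basis j x * cnj (fourier_basis l x) = exp (\<i> * of_int (l - j) * of_real x)"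
  unfolding fourier_basis_def by (simp add: exp_cnj exp_add[symmetric] algebra_simps)

lemma square_integrable_fourier_basis: "square_integrable (fourier_basis j)"
  by (rule square_integrable_bounded[where B=1]) simp_all

lemma integral_exp_Mpi:
  "(LINT x|Mpi. exp (\<i> * of_int n * of_real x)) = (if n = 0 then 2 * pi else 0)"
proof (cases "n = 0")
  case True
  then show ?thesis using measure_Mpi[of "{-pi..pi}"] by (simp add: scaleR_conv_of_real)
next
  case False
  define F where "F x = exp (\<i> * of_int n * of_real x) / (\<i> * of_int n)" for x :: real
  have "(F has_vector_derivative exp (\<i> * of_int n * of_real x)) (at x within {-pi..pi})" for x
    unfolding F_def using False
    by (intro has_vector_derivative_real_field) (auto intro!: derivative_eq_intros simp: field_simps)
  then have "((\<lambda>x. exp (\<i> * of_int n * of_real x)) has_integral (F pi - F (-pi))) {-pi..pi}"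
    by (intro fundamental_theorem_of_calculus) auto
  moreover have "F pi = F (-pi)"
  proof -
    have "sin (of_int n * of_real pi :: complex) = 0"
      by (simp add: sin_int_times_real mult.commute)
    then have "exp (\<i> * (of_int n * of_real pi)) - exp (- (\<i> * (of_int n * of_real pi))) = 0"
      by (simp add: sin_exp_eq)
    then show ?thesis by (simp add: F_def mult.assoc)
  qed
  moreover have "integrable Mpi (\<lambda>x. exp (\<i> * of_int n * of_real x))"
    by (rule finite_measure.integrable_const_bound[OF finite_measure_Mpi, where B=1])
      (simp_all add: norm_exp_eq_Re)
  ultimately show ?thesis
    using False set_borel_integral_eq_integral(2)[of "{-pi..pi}" "\<lambda>x. exp (\<i> * of_int n * of_real x)"]
    by (simp add: integral_Mpi_eq_set_integral integrable_Mpi_iff integral_unique)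
qed

lemma L2_inner_fourier_basis: "L2_inner (fourier_basis j) (fourier_basis l) = (if j = l then 1 else 0)"
  unfolding L2_inner_def fourier_basis_mult_cnj integral_exp_Mpi by simp

lemma trig_poly_measurable [measurable]: "trig_poly F c \<in> borel_measurable Mpi"
  unfolding trig_poly_def by measurable

lemma norm_trig_poly_le: "cmod (trig_poly F c x) \<le> (\<Sum>j\<in>F. cmod (c j))"
  unfolding trig_poly_def using norm_sum[of "\<lambda>j. c j * fourier_basis j x" F] by (simp add: norm_mult)

lemma square_integrable_trig_poly: "square_integrable (trig_poly F c)"
  by (rule square_integrable_bounded[OF trig_poly_measurable norm_trig_poly_le])

lemma cnj_L2_inner: "cnj (L2_inner u v) = L2_inner v u"
  unfolding L2_inner_def
  by (simp add: Bochner_Integration.integral_cnj[symmetric] mult.commute del: Bochner_Integration.integral_cnj)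

lemma L2_inner_cmult_left: "L2_inner (\<lambda>x. a * u x) w = a * L2_inner u w"
  by (simp add: L2_inner_def mult.assoc)

lemma L2_inner_sum_left:
  assumes "\<And>j. j \<in> F \<Longrightarrow> square_integrable (u j)" "square_integrable w"
  shows "L2_inner (\<lambda>x. \<Sum>j\<in>F. u j x) w = (\<Sum>j\<in>F. L2_inner (u j) w)"
  using assms by (simp add: L2_inner_def sum_distrib_right sum_divide_distrib integrable_mult_cnj)

lemma sum_cnj_mult_self: "(\<Sum>j\<in>F. cnj (c j) * c j) = of_real ((L2_set (\<lambda>j. cmod (c j)) F)\<^sup>2)"
proof -
  have "(\<Sum>j\<in>F. cnj (c j) * c j) = (\<Sum>j\<in>F. of_real ((cmod (c j))\<^sup>2))"
    by (intro sum.cong refl) (simp only: complex_norm_square mult.commute)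
  then show ?thesis by (simp add: L2_set_def sum_nonneg)
qed

lemma L2_inner_trig_poly_basis:
  assumes "finite F"
  shows "L2_inner (trig_poly F c) (fourier_basis l) = (if l \<in> F then c l else 0)"
proof -
  have "L2_inner (trig_poly F c) (fourier_basis l)
          = (\<Sum>j\<in>F. c j * L2_inner (fourier_basis j) (fourier_basis l))"
    unfolding trig_poly_def
    by (simp add: L2_inner_sum_left L2_inner_cmult_left square_integrable_cmult square_integrable_fourier_basis)
  also have "\<dots> = (if l \<in> F then c l else 0)"
    using assms by (simp add: L2_inner_fourier_basis if_distrib sum.delta cong: if_cong)
  finally show ?thesis .
qed

lemma L2_inner_trig_poly_right:
  assumes "square_integrable g"
  shows "L2_inner g (trig_poly F c) = (\<Sum>j\<in>F. cnj (c j) * L2_inner g (fourier_basis j))"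
proof -
  have "L2_inner (trig_poly F c) g = (\<Sum>j\<in>F. c j * L2_inner (fourier_basis j) g)"
    unfolding trig_poly_def using assms
    by (simp add: L2_inner_sum_left L2_inner_cmult_left square_integrable_cmult square_integrable_fourier_basis)
  from arg_cong[OF this, of cnj] show ?thesis
    by (simp add: cnj_L2_inner)
qed

lemma L2_norm_trig_poly:
  assumes "finite F"
  shows "L2_norm (trig_poly F c) = L2_set (\<lambda>j. cmod (c j)) F"
proof -
  have "of_real ((L2_norm (trig_poly F c))\<^sup>2) = (\<Sum>j\<in>F. cnj (c j) * c j)"
    unfolding L2_inner_self[symmetric] L2_inner_trig_poly_right[OF square_integrable_trig_poly]
    using assms by (simp add: L2_inner_trig_poly_basis)
  then have "(L2_norm (trig_poly F c))\<^sup>2 = (L2_set (\<lambda>j. cmod (c j)) F)\<^sup>2"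
    unfolding sum_cnj_mult_self of_real_eq_iff .
  then show ?thesis
    using L2_norm_nonneg by (simp add: power2_eq_iff_nonneg)
qed

theorem Bessel_inequality:
  assumes h: "square_integrable h" and F: "finite F"
  shows "L2_set (\<lambda>j. cmod (L2_inner h (fourier_basis j))) F \<le> L2_norm h"
proof -
  define c where "c j = L2_inner h (fourier_basis j)" for j
  define S where "S = L2_set (\<lambda>j. cmod (c j)) F"
  have "of_real (S\<^sup>2) = L2_inner h (trig_poly F c)"
    unfolding L2_inner_trig_poly_right[OF h] S_def c_def sum_cnj_mult_self ..
  then have "S\<^sup>2 = cmod (L2_inner h (trig_poly F c))"
    by (metis abs_of_nonneg norm_of_real zero_le_power2)
  then have "S * S \<le> L2_norm h * S"
    using L2_Cauchy_Schwarz[OF h square_integrable_trig_poly, of F c]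
    by (simp add: L2_norm_trig_poly[OF F] S_def power2_eq_square)
  then show ?thesis
    using L2_norm_nonneg[of h] by (cases "S = 0") (auto simp: S_def c_def mult_le_cancel_right)
qed

definition is_trig_poly :: "(real \<Rightarrow> complex) \<Rightarrow> bool" where
  "is_trig_poly T \<longleftrightarrow> (\<exists>F c. finite F \<and> T = trig_poly F c)"

lemma square_integrable_is_trig_poly: "is_trig_poly T \<Longrightarrow> square_integrable T"
  unfolding is_trig_poly_def using square_integrable_trig_poly by blast

lemma trig_poly_extend:
  assumes "finite G" "F \<subseteq> G"
  shows "trig_poly F c = trig_poly G (\<lambda>j. if j \<in> F then c j else 0)"
  unfolding trig_poly_def using assms by (intro ext sum.mono_neutral_cong_left) auto

lemma is_trig_poly_const: "is_trig_poly (\<lambda>x. a)"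
  unfolding is_trig_poly_def trig_poly_def fourier_basis_def
  by (intro exI[where x="{0}"] exI[where x="\<lambda>_. a"]) simp

lemma is_trig_poly_basis: "is_trig_poly (\<lambda>x. a * fourier_basis j x)"
  unfolding is_trig_poly_def trig_poly_def
  by (intro exI[where x="{j}"] exI[where x="\<lambda>_. a"]) simp

lemma is_trig_poly_add:
  assumes "is_trig_poly T" "is_trig_poly U"
  shows "is_trig_poly (\<lambda>x. T x + U x)"
proof -
  obtain F c G d where FG: "finite F" "finite G" and T: "T = trig_poly F c" and U: "U = trig_poly G d"
    using assms unfolding is_trig_poly_def by blast
  define c' where "c' j = (if j \<in> F then c j else 0)" for j
  define d' where "d' j = (if j \<in> G then d j else 0)" for j
  have "T = trig_poly (F \<union> G) c'" "U = trig_poly (F \<union> G) d'"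
    unfolding T U c'_def d'_def using FG by (intro trig_poly_extend; simp)+
  then have "(\<lambda>x. T x + U x) = trig_poly (F \<union> G) (\<lambda>j. c' j + d' j)"
    by (simp add: fun_eq_iff trig_poly_def distrib_right sum.distrib)
  then show ?thesis unfolding is_trig_poly_def using FG by blast
qed

lemma is_trig_poly_cmult:
  assumes "is_trig_poly T"
  shows "is_trig_poly (\<lambda>x. a * T x)"
proof -
  obtain F c where "finite F" "T = trig_poly F c"
    using assms unfolding is_trig_poly_def by blast
  then have "finite F \<and> (\<lambda>x. a * T x) = trig_poly F (\<lambda>j. a * c j)"
    by (simp add: fun_eq_iff trig_poly_def sum_distrib_left mult.assoc)
  then show ?thesis unfolding is_trig_poly_def by blast
qed

lemma fourier_basis_mult: "fourier_basis j x * fourier_basis l x = fourier_basis (j + l) x"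
  unfolding fourier_basis_def by (simp add: exp_add[symmetric] algebra_simps)

lemma is_trig_poly_mult:
  assumes "is_trig_poly T" "is_trig_poly U"
  shows "is_trig_poly (\<lambda>x. T x * U x)"
proof -
  obtain F c G d where FG: "finite F" "finite G" and T: "T = trig_poly F c" and U: "U = trig_poly G d"
    using assms unfolding is_trig_poly_def by blast
  define s where "s p = fst p + snd p" for p :: "int \<times> int"
  define e where "e n = (\<Sum>p\<in>{p \<in> F \<times> G. s p = n}. c (fst p) * d (snd p))" for n
  have "(\<lambda>x. T x * U x) = trig_poly (s ` (F \<times> G)) e"
  proof
    fix x
    have "T x * U x = (\<Sum>i\<in>F. \<Sum>j\<in>G. c i * d j * fourier_basis (i + j) x)"
      unfolding T U trig_poly_def sum_product by (simp add: fourier_basis_mult[symmetric] mult_ac)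
    also have "\<dots> = (\<Sum>p\<in>F \<times> G. c (fst p) * d (snd p) * fourier_basis (s p) x)"
      by (simp add: sum.cartesian_product' s_def)
    also have "\<dots> = (\<Sum>n\<in>s ` (F \<times> G). \<Sum>p\<in>{p \<in> F \<times> G. s p = n}. c (fst p) * d (snd p) * fourier_basis (s p) x)"
      using FG by (intro sum.group[symmetric]) auto
    also have "\<dots> = trig_poly (s ` (F \<times> G)) e x"
      unfolding trig_poly_def e_def sum_distrib_right by (intro sum.cong refl) auto
    finally show "T x * U x = trig_poly (s ` (F \<times> G)) e x" .
  qed
  moreover have "finite (s ` (F \<times> G))" using FG by simp
  ultimately show ?thesis unfolding is_trig_poly_def by blast
qed

lemma is_trig_poly_cos: "is_trig_poly (\<lambda>x. of_real (cos x))"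
proof -
  have "of_real (cos x) = 1/2 * fourier_basis (-1) x + 1/2 * fourier_basis 1 x" for x
    unfolding fourier_basis_def cos_of_real[symmetric] cos_exp_eq by (simp add: field_simps)
  then show ?thesis
    using is_trig_poly_add[OF is_trig_poly_basis is_trig_poly_basis, of "1/2" "-1" "1/2" 1] by simp
qed

lemma is_trig_poly_sin: "is_trig_poly (\<lambda>x. of_real (sin x))"
proof -
  have "of_real (sin x) = 1/(2*\<i>) * fourier_basis (-1) x + -1/(2*\<i>) * fourier_basis 1 x" for x
    unfolding fourier_basis_def sin_of_real[symmetric] sin_exp_eq by (simp add: field_simps)
  then show ?thesis
    using is_trig_poly_add[OF is_trig_poly_basis is_trig_poly_basis, of "1/(2*\<i>)" "-1" "-1/(2*\<i>)" 1] by simp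
qed

lemma is_trig_poly_polynomial_cos:
  "real_polynomial_function p \<Longrightarrow> is_trig_poly (\<lambda>x. of_real (p (cos x)))"
proof (induction p rule: real_polynomial_function.induct)
  case (linear f)
  then have "f (cos x) = f 1 * cos x" for x
    using linear_scale_real[OF bounded_linear.linear, of f "cos x" 1] by simp
  then show ?case using is_trig_poly_cmult[OF is_trig_poly_cos, of "of_real (f 1)"] by simp
next
  case (const c)
  then show ?case by (rule is_trig_poly_const)
next
  case (add f g)
  then show ?case using is_trig_poly_add by simp
next
  case (mult f g)
  then show ?case using is_trig_poly_mult by simp
qed

lemma sin_le_sin_within_margin:
  assumes "0 < d" "d \<le> t" "t \<le> pi - d"
  shows "sin d \<le> sin t"
proof (cases "t \<le> pi / 2")
  case True
  then show ?thesis using assms by (intro sin_monotone_2pi_le) auto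
next
  case False
  then have "sin d \<le> sin (pi - t)" using assms by (intro sin_monotone_2pi_le) auto
  then show ?thesis by simp
qed

text \<open>On \<open>[-\<pi>, \<pi>]\<close> the even part of \<open>\<phi>\<close> is a continuous function of \<open>cos x\<close> and the odd part is
  \<open>sin x\<close> times one; the latter division by \<open>sin |x|\<close> is harmless because \<open>\<phi>\<close> vanishes near \<open>0\<close>
  and \<open>\<pm>\<pi>\<close>. Weierstrass approximation of both parts by polynomials in \<open>cos x\<close> gives the result.\<close>
lemma trig_poly_uniform_approximation:
  fixes \<phi> :: "real \<Rightarrow> real"
  assumes cont: "continuous_on UNIV \<phi>" and "0 < \<delta>"
    and supp: "\<And>x. \<phi> x \<noteq> 0 \<Longrightarrow> \<delta> \<le> \<bar>x\<bar> \<and> \<bar>x\<bar> \<le> pi - \<delta>" and "0 < \<epsilon>"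
  obtains T where "is_trig_poly T" "\<And>x. x \<in> {-pi..pi} \<Longrightarrow> cmod (of_real (\<phi> x) - T x) \<le> \<epsilon>"
proof (cases "\<delta> \<le> pi / 2")
  case False
  then have "\<phi> x = 0" for x using supp[of x] by linarith
  then show ?thesis using that[OF is_trig_poly_const[of 0]] \<open>0 < \<epsilon>\<close> by simp
next
  case True
  have "0 < sin \<delta>" using \<open>0 < \<delta>\<close> True by (intro sin_gt_zero) auto
  define w where "w y = max (sqrt (1 - y\<^sup>2)) (sin \<delta>)" for y
  define \<alpha> where "\<alpha> y = \<phi> (arccos y) + \<phi> (- arccos y)" for y
  define \<beta> where "\<beta> y = (\<phi> (arccos y) - \<phi> (- arccos y)) / w y" for y
  have "continuous_on {-1..1} (\<lambda>y. \<phi> (arccos y))" "continuous_on {-1..1} (\<lambda>y. \<phi> (- arccos y))"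
    by (auto intro!: continuous_on_compose2[OF cont] continuous_intros continuous_on_arccos')
  moreover have "continuous_on {-1..1} w" "\<And>y. w y \<noteq> 0"
    using \<open>0 < sin \<delta>\<close> unfolding w_def by (auto intro!: continuous_intros)
  ultimately have "continuous_on {-1..1} \<alpha>" "continuous_on {-1..1} \<beta>"
    unfolding \<alpha>_def \<beta>_def by (auto intro!: continuous_intros)
  then obtain p q where p: "real_polynomial_function p" "\<And>y. y \<in> {-1..1} \<Longrightarrow> \<bar>\<alpha> y - p y\<bar> < \<epsilon>"
    and q: "real_polynomial_function q" "\<And>y. y \<in> {-1..1} \<Longrightarrow> \<bar>\<beta> y - q y\<bar> < \<epsilon>"
    using Stone_Weierstrass_real_polynomial_function[OF compact_Icc _ \<open>0 < \<epsilon>\<close>] by metis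
  define T where "T x = 1/2 * (of_real (p (cos x)) + of_real (sin x) * of_real (q (cos x)) :: complex)" for x
  have "is_trig_poly T"
    unfolding T_def by (intro is_trig_poly_cmult is_trig_poly_add is_trig_poly_mult
        is_trig_poly_sin is_trig_poly_polynomial_cos p(1) q(1))
  moreover have "2 * \<phi> x = \<alpha> (cos x) + sin x * \<beta> (cos x)" if "x \<in> {-pi..pi}" for x
  proof -
    define t where "t = \<bar>x\<bar>"
    have "t \<in> {0..pi}" "cos t = cos x" using that by (auto simp: t_def)
    then have arccos: "arccos (cos x) = t" by (metis arccos_cos atLeastAtMost_iff)
    have t_cases: "(x = t \<and> sin x = sin t) \<or> (x = - t \<and> sin x = - sin t)"
      by (cases "0 \<le> x") (simp_all add: t_def)
    show ?thesis
    proof (cases "\<phi> t = 0 \<and> \<phi> (- t) = 0")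
      case True
      then have "\<phi> x = 0" using t_cases by auto
      then show ?thesis using True by (simp add: \<alpha>_def \<beta>_def arccos)
    next
      case False
      then have "\<delta> \<le> t" "t \<le> pi - \<delta>" using supp[of t] supp[of "-t"] \<open>t \<in> {0..pi}\<close> by auto
      then have "sin \<delta> \<le> sin t" by (intro sin_le_sin_within_margin[OF \<open>0 < \<delta>\<close>])
      moreover have "sqrt (1 - (cos x)\<^sup>2) = sin t"
        using sin_arccos[of "cos x"] arccos by simp
      ultimately have "w (cos x) = sin t" "sin t \<noteq> 0"
        using \<open>0 < sin \<delta>\<close> unfolding w_def by auto
      then have "sin x * \<beta> (cos x) = \<phi> x - \<phi> (- x)"
        using t_cases by (auto simp: \<beta>_def arccos)
      moreover have "\<alpha> (cos x) = \<phi> x + \<phi> (- x)"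
        using t_cases by (auto simp: \<alpha>_def arccos)
      ultimately show ?thesis by simp
    qed
  qed
  moreover have "cmod (of_real (\<phi> x) - T x) \<le> \<epsilon>"
    if "2 * \<phi> x = \<alpha> (cos x) + sin x * \<beta> (cos x)" for x
  proof -
    have "\<bar>\<alpha> (cos x) - p (cos x)\<bar> \<le> \<epsilon>" "\<bar>\<beta> (cos x) - q (cos x)\<bar> \<le> \<epsilon>"
      using p(2)[of "cos x"] q(2)[of "cos x"] by simp_all
    moreover have "\<bar>sin x * (\<beta> (cos x) - q (cos x))\<bar> \<le> \<bar>\<beta> (cos x) - q (cos x)\<bar>"
      unfolding abs_mult using abs_sin_le_one[of x] by (simp add: mult_left_le_one_le)
    moreover have "of_real (\<phi> x) - T x = of_real (\<phi> x - (p (cos x) + sin x * q (cos x)) / 2)"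
      unfolding T_def by simp
    moreover have "\<phi> x - (p (cos x) + sin x * q (cos x)) / 2
                     = (\<alpha> (cos x) - p (cos x)) / 2 + sin x * (\<beta> (cos x) - q (cos x)) / 2"
      using that by (simp add: field_simps)
    moreover have "\<bar>a / 2 + b / 2\<bar> \<le> \<epsilon>" if "\<bar>a\<bar> \<le> \<epsilon>" "\<bar>b\<bar> \<le> \<epsilon>" for a b :: real
      using that by (simp add: abs_le_iff)
    ultimately show ?thesis by (metis norm_of_real order_trans)
  qed
  ultimately show ?thesis using that by blast
qed

definition trig_approximable :: "(real \<Rightarrow> complex) \<Rightarrow> bool" where
  "trig_approximable g \<longleftrightarrow> (\<forall>\<epsilon>>0. \<exists>T. is_trig_poly T \<and> L2_norm (\<lambda>x. g x - T x) < \<epsilon>)"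

lemma trig_approximable_AE_cong:
  assumes [measurable]: "g \<in> borel_measurable Mpi" "h \<in> borel_measurable Mpi"
    and "AE x in Mpi. g x = h x" and "trig_approximable h"
  shows "trig_approximable g"
  unfolding trig_approximable_def
proof (intro allI impI)
  fix \<epsilon> :: real assume "0 < \<epsilon>"
  then obtain T where T: "is_trig_poly T" "L2_norm (\<lambda>x. h x - T x) < \<epsilon>"
    using assms(4) unfolding trig_approximable_def by blast
  have [measurable]: "T \<in> borel_measurable Mpi"
    using square_integrable_is_trig_poly[OF T(1)] by (simp add: square_integrable_def)
  have "AE x in Mpi. (cmod (g x - T x))\<^sup>2 = (cmod (h x - T x))\<^sup>2"
    using assms(3) by eventually_elim simp
  then have "(LINT x|Mpi. (cmod (g x - T x))\<^sup>2) = (LINT x|Mpi. (cmod (h x - T x))\<^sup>2)"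
    by (intro integral_cong_AE) measurable
  then show "\<exists>T. is_trig_poly T \<and> L2_norm (\<lambda>x. g x - T x) < \<epsilon>"
    using T by (intro exI[of _ T]) (simp add: L2_norm_def)
qed

lemma trig_approximable_add:
  assumes "square_integrable g" "square_integrable h" "trig_approximable g" "trig_approximable h"
  shows "trig_approximable (\<lambda>x. g x + h x)"
  unfolding trig_approximable_def
proof (intro allI impI)
  fix \<epsilon> :: real assume "0 < \<epsilon>"
  then have "0 < \<epsilon> / 2" by simp
  then obtain T U where T: "is_trig_poly T" "L2_norm (\<lambda>x. g x - T x) < \<epsilon> / 2"
    and U: "is_trig_poly U" "L2_norm (\<lambda>x. h x - U x) < \<epsilon> / 2"
    using assms(3,4) unfolding trig_approximable_def by blast
  have "L2_norm (\<lambda>x. (g x - T x) + (h x - U x)) \<le> L2_norm (\<lambda>x. g x - T x) + L2_norm (\<lambda>x. h x - U x)"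
    using square_integrable_is_trig_poly[OF T(1)] square_integrable_is_trig_poly[OF U(1)] assms(1,2)
    by (intro L2_norm_triangle square_integrable_diff)
  then have "L2_norm (\<lambda>x. g x + h x - (T x + U x)) < \<epsilon>"
    using T(2) U(2) by (simp add: algebra_simps)
  then show "\<exists>V. is_trig_poly V \<and> L2_norm (\<lambda>x. g x + h x - V x) < \<epsilon>"
    using is_trig_poly_add[OF T(1) U(1)] by blast
qed

lemma trig_approximable_cmult:
  assumes "trig_approximable g"
  shows "trig_approximable (\<lambda>x. a * g x)"
  unfolding trig_approximable_def
proof (intro allI impI)
  fix \<epsilon> :: real assume "0 < \<epsilon>"
  then have "0 < \<epsilon> / (cmod a + 1)" by (simp add: add_nonneg_pos)
  then obtain T where T: "is_trig_poly T" "L2_norm (\<lambda>x. g x - T x) < \<epsilon> / (cmod a + 1)"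
    using assms unfolding trig_approximable_def by blast
  have "L2_norm (\<lambda>x. a * g x - a * T x) = cmod a * L2_norm (\<lambda>x. g x - T x)"
    using L2_norm_cmult[of a "\<lambda>x. g x - T x"] by (simp add: right_diff_distrib)
  also have "\<dots> \<le> cmod a * (\<epsilon> / (cmod a + 1))"
    using T(2) by (intro mult_left_mono) simp_all
  also have "\<dots> < \<epsilon>"
  proof -
    have "0 < cmod a + 1" by (simp add: add_nonneg_pos)
    then show ?thesis using \<open>0 < \<epsilon>\<close> by (simp add: field_simps)
  qed
  finally show "\<exists>U. is_trig_poly U \<and> L2_norm (\<lambda>x. a * g x - U x) < \<epsilon>"
    using is_trig_poly_cmult[OF T(1)] by blast
qed

lemma trig_approximable_sum:
  assumes "finite S" "\<And>y. y \<in> S \<Longrightarrow> square_integrable (g y) \<and> trig_approximable (g y)"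
  shows "trig_approximable (\<lambda>x. \<Sum>y\<in>S. g y x)"
  using assms
proof (induction S rule: finite_induct)
  case empty
  have "L2_norm (\<lambda>x. 0) = 0" by (simp add: L2_norm_def)
  then show ?case using is_trig_poly_const[of 0] by (auto simp: trig_approximable_def)
next
  case (insert y S)
  have "square_integrable (\<lambda>x. \<Sum>y\<in>S. g y x)"
    using insert by (intro square_integrable_sum) auto
  then show ?case
    using insert by (simp add: trig_approximable_add)
qed

lemma trig_approximable_limit:
  assumes "square_integrable g"
    and "\<And>\<epsilon>. 0 < \<epsilon> \<Longrightarrow> \<exists>h. square_integrable h \<and> trig_approximable h \<and> L2_norm (\<lambda>x. g x - h x) < \<epsilon>"
  shows "trig_approximable g"
  unfolding trig_approximable_def
proof (intro allI impI)
  fix \<epsilon> :: real assume "0 < \<epsilon>"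
  then have "0 < \<epsilon> / 2" by simp
  then obtain h where h: "square_integrable h" "trig_approximable h" "L2_norm (\<lambda>x. g x - h x) < \<epsilon> / 2"
    using assms(2) by blast
  obtain T where T: "is_trig_poly T" "L2_norm (\<lambda>x. h x - T x) < \<epsilon> / 2"
    using h(2) \<open>0 < \<epsilon> / 2\<close> unfolding trig_approximable_def by blast
  have "L2_norm (\<lambda>x. g x - T x) < \<epsilon>"
    using L2_norm_triangle_diff[OF assms(1) h(1) square_integrable_is_trig_poly[OF T(1)]] h(3) T(2)
    by linarith
  then show "\<exists>T. is_trig_poly T \<and> L2_norm (\<lambda>x. g x - T x) < \<epsilon>" using T(1) by blast
qed

lemma trig_approximable_uniform:
  assumes "h \<in> borel_measurable Mpi"
    and "\<And>\<epsilon>. 0 < \<epsilon> \<Longrightarrow> \<exists>T. is_trig_poly T \<and> (\<forall>x\<in>{-pi..pi}. cmod (h x - T x) \<le> \<epsilon>)"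
  shows "trig_approximable h"
  unfolding trig_approximable_def
proof (intro allI impI)
  fix \<epsilon> :: real assume "0 < \<epsilon>"
  then obtain T where T: "is_trig_poly T" "\<And>x. x \<in> {-pi..pi} \<Longrightarrow> cmod (h x - T x) \<le> \<epsilon> / 2"
    using assms(2)[of "\<epsilon> / 2"] by auto
  have "square_integrable (\<lambda>x. h x - T x)"
    using assms(1) square_integrable_is_trig_poly[OF T(1)] T(2)
    by (intro square_integrable_bounded[where B="\<epsilon> / 2"]) (auto simp: square_integrable_def)
  then have "L2_norm (\<lambda>x. h x - T x) \<le> \<epsilon> / 2"
    using \<open>0 < \<epsilon>\<close> T(2) by (intro L2_norm_le_bound) auto
  then show "\<exists>T. is_trig_poly T \<and> L2_norm (\<lambda>x. h x - T x) < \<epsilon>"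
    using T(1) \<open>0 < \<epsilon>\<close> by (intro exI[of _ T]) auto
qed

lemma closed_open_approximation_away_from_0_pi:
  assumes A: "A \<in> sets borel" and sub: "A \<subseteq> {-pi<..<0} \<union> {0<..<pi}" and "0 < e"
  obtains C U \<delta> where "closed C" "open U" "C \<subseteq> A" "C \<subseteq> U" "0 < \<delta>"
    "\<And>x. x \<in> U \<Longrightarrow> \<delta> \<le> \<bar>x\<bar> \<and> \<bar>x\<bar> \<le> pi - \<delta>"
    "measure lebesgue (A - C) < e" "measure lebesgue (U - A) < e"
proof -
  have "A \<in> sets lebesgue" using A by simp
  obtain C where C: "closed C" "C \<subseteq> A" "A - C \<in> lmeasurable" "emeasure lebesgue (A - C) < e"
    using sets_lebesgue_inner_closed[OF \<open>A \<in> sets lebesgue\<close> \<open>0 < e\<close>] by blast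
  obtain V where V: "open V" "A \<subseteq> V" "V - A \<in> lmeasurable" "emeasure lebesgue (V - A) < e"
    using sets_lebesgue_outer_open[OF \<open>A \<in> sets lebesgue\<close> \<open>0 < e\<close>] by blast
  have "C \<subseteq> {-pi..pi}" using C(2) sub by auto
  then have "compact C"
    using C(1) bounded_subset[OF bounded_closed_interval[of "-pi" pi]] by (simp add: compact_eq_bounded_closed)
  moreover have "C \<inter> {-pi, 0, pi} = {}" using C(2) sub by auto
  moreover have "closed {-pi, 0, pi :: real}" by simp
  ultimately obtain d where "0 < d" and "\<forall>x\<in>C. \<forall>y\<in>{-pi, 0, pi}. d \<le> dist x y"
    using separate_compact_closed[of C "{-pi, 0, pi}"] by blast
  then have d: "\<And>x y. x \<in> C \<Longrightarrow> y \<in> {-pi, 0, pi} \<Longrightarrow> d \<le> dist x y" by blast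
  define U where "U = V \<inter> {x. d / 2 < \<bar>x\<bar> \<and> \<bar>x\<bar> < pi - d / 2}"
  have "open {x::real. d / 2 < \<bar>x\<bar>}" "open {x::real. \<bar>x\<bar> < pi - d / 2}"
    by (rule open_Collect_less; intro continuous_intros)+
  then have "open U"
    unfolding U_def Collect_conj_eq by (intro open_Int V(1))
  moreover have "C \<subseteq> U"
  proof
    fix x assume "x \<in> C"
    then have "d \<le> dist x 0" "d \<le> dist x pi" "d \<le> dist x (- pi)"
      by (rule d, simp)+
    moreover have "x \<in> {-pi<..<pi}" using \<open>x \<in> C\<close> sub C(2) by auto
    ultimately have "d \<le> \<bar>x\<bar>" "d \<le> \<bar>x - pi\<bar>" "d \<le> \<bar>x + pi\<bar>" "x \<in> {-pi<..<pi}"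
      by (simp_all add: dist_real_def)
    then show "x \<in> U" using \<open>x \<in> C\<close> C(2) V(2) \<open>0 < d\<close> by (auto simp: U_def)
  qed
  moreover have "measure lebesgue (A - C) < e"
    using C(3,4) by (simp add: emeasure_eq_measure2 ennreal_less_iff)
  moreover have "measure lebesgue (U - A) < e"
  proof -
    have "measure lebesgue (U - A) \<le> measure lebesgue (V - A)"
      using V(3) \<open>open U\<close> A by (intro measure_mono_fmeasurable) (auto simp: U_def)
    also have "\<dots> < e"
      using V(3,4) by (simp add: emeasure_eq_measure2 ennreal_less_iff)
    finally show ?thesis .
  qed
  moreover have "\<And>x. x \<in> U \<Longrightarrow> d / 2 \<le> \<bar>x\<bar> \<and> \<bar>x\<bar> \<le> pi - d / 2"
    by (auto simp: U_def)
  ultimately show ?thesis using that[of C U "d / 2"] C(1,2) \<open>0 < d\<close> by (meson half_gt_zero)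
qed

lemma trig_approximable_indicator_away_from_0_pi:
  assumes A: "A \<in> sets borel" and sub: "A \<subseteq> {-pi<..<0} \<union> {0<..<pi}"
  shows "trig_approximable (indicator A)"
proof (rule trig_approximable_limit)
  show "square_integrable (indicator A)"
    using A by (intro square_integrable_bounded[where B=1]) (auto simp: indicator_def)
  fix \<epsilon> :: real assume "0 < \<epsilon>"
  define e where "e = pi * \<epsilon>\<^sup>2 / 2"
  have "0 < e" using \<open>0 < \<epsilon>\<close> by (simp add: e_def)
  obtain C U \<delta> where CU: "closed C" "open U" "C \<subseteq> A" "C \<subseteq> U" "0 < \<delta>"
    and U: "\<And>x. x \<in> U \<Longrightarrow> \<delta> \<le> \<bar>x\<bar> \<and> \<bar>x\<bar> \<le> pi - \<delta>"
    and small: "measure lebesgue (A - C) < e" "measure lebesgue (U - A) < e"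
    using closed_open_approximation_away_from_0_pi[OF A sub \<open>0 < e\<close>] by blast
  obtain \<phi> :: "real \<Rightarrow> real" where \<phi>: "continuous_on UNIV \<phi>" "\<And>x. \<phi> x \<in> closed_segment 0 1"
    "\<And>x. x \<in> - U \<Longrightarrow> \<phi> x = 0" "\<And>x. x \<in> C \<Longrightarrow> \<phi> x = 1"
    using Urysohn[of "- U" C 0 1] CU by auto
  have \<phi>01: "0 \<le> \<phi> x" "\<phi> x \<le> 1" for x using \<phi>(2)[of x] by (auto simp: closed_segment_eq_real_ivl)
  have "cmod (1 - of_real (\<phi> x)) \<le> 1" for x
  proof -
    have "1 - of_real (\<phi> x) = (of_real (1 - \<phi> x) :: complex)" by simp
    then show ?thesis using \<phi>01[of x] by (simp only: norm_of_real)
  qed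
  have \<phi>_measurable [measurable]: "(\<lambda>x. complex_of_real (\<phi> x)) \<in> borel_measurable Mpi"
    using borel_measurable_continuous_onI[OF \<phi>(1)] by (intro measurable_Mpi) measurable
  have "trig_approximable (\<lambda>x. of_real (\<phi> x))"
  proof (rule trig_approximable_uniform[OF \<phi>_measurable])
    fix \<eta> :: real assume "0 < \<eta>"
    have "\<delta> \<le> \<bar>x\<bar> \<and> \<bar>x\<bar> \<le> pi - \<delta>" if "\<phi> x \<noteq> 0" for x
    proof -
      have "x \<in> U" using \<phi>(3)[of x] that by auto
      then show ?thesis by (rule U)
    qed
    then obtain T where "is_trig_poly T" "\<And>x. x \<in> {-pi..pi} \<Longrightarrow> cmod (of_real (\<phi> x) - T x) \<le> \<eta>"
      by (rule trig_poly_uniform_approximation[OF \<phi>(1) \<open>0 < \<delta>\<close> _ \<open>0 < \<eta>\<close>]) auto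
    then show "\<exists>T. is_trig_poly T \<and> (\<forall>x\<in>{-pi..pi}. cmod (of_real (\<phi> x) - T x) \<le> \<eta>)"
      by blast
  qed
  moreover have "square_integrable (\<lambda>x. of_real (\<phi> x))"
    using \<phi>01 by (intro square_integrable_bounded[OF \<phi>_measurable, where B=1]) simp
  moreover have "L2_norm (\<lambda>x. indicator A x - of_real (\<phi> x)) < \<epsilon>"
  proof -
    define E where "E = (A - C) \<union> (U - A)"
    have "U \<subseteq> {-pi..pi}"
    proof
      fix x assume "x \<in> U"
      then have "\<bar>x\<bar> \<le> pi - \<delta>" using U by blast
      then show "x \<in> {-pi..pi}" using \<open>0 < \<delta>\<close> by (auto simp: abs_le_iff)
    qed
    moreover have "A \<subseteq> {-pi..pi}" using sub by auto
    ultimately have "E \<subseteq> {-pi..pi}" unfolding E_def by blast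
    moreover have "E \<in> sets borel"
      unfolding E_def using A CU(1,2) by (intro sets.Un sets.Diff) (simp_all add: borel_closed borel_open)
    ultimately have E: "E \<in> sets borel" "E \<subseteq> {-pi..pi}" by simp_all
    have "(cmod (indicator A x - of_real (\<phi> x)))\<^sup>2 \<le> indicator E x" for x
    proof -
      consider "x \<in> C" | "x \<in> A - C" | "x \<in> U - A" | "x \<notin> A" "x \<notin> U" by blast
      then show ?thesis
      proof cases
        case 1
        then have "x \<in> A" using CU(3) by blast
        then show ?thesis using \<phi>(4)[OF 1] by simp
      next
        case 2
        then show ?thesis
          using \<open>cmod (1 - of_real (\<phi> x)) \<le> 1\<close> by (simp add: E_def power_le_one)
      next
        case 3
        then show ?thesis using \<phi>01[of x] by (simp add: E_def power_le_one)
      next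
        case 4
        then show ?thesis using \<phi>(3)[of x] by simp
      qed
    qed
    then have "(LINT x|Mpi. (cmod (indicator A x - of_real (\<phi> x)))\<^sup>2) \<le> (LINT x|Mpi. indicator E x)"
      using E by (intro integral_mono') (auto intro: finite_measure.integrable_const_bound[OF finite_measure_Mpi, where B=1])
    also have "\<dots> = measure lebesgue E"
      using E measure_Mpi[OF E] by (simp add: Int_absorb2)
    also have "\<dots> \<le> measure lebesgue (A - C) + measure lebesgue (U - A)"
      unfolding E_def using A CU(1,2) by (intro measure_Un_le) auto
    also have "\<dots> < 2 * e" using small by simp
    also have "\<dots> < \<epsilon>\<^sup>2 * (2 * pi)"
      using \<open>0 < \<epsilon>\<close> by (simp add: e_def)
    finally show ?thesis
      unfolding L2_norm_def using \<open>0 < \<epsilon>\<close> by (intro real_less_lsqrt) (simp_all add: pos_divide_less_eq)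
  qed
  ultimately show "\<exists>h. square_integrable h \<and> trig_approximable h \<and> L2_norm (\<lambda>x. indicator A x - h x) < \<epsilon>"
    by blast
qed

lemma trig_approximable_indicator:
  assumes A: "A \<in> sets borel"
  shows "trig_approximable (indicator A)"
proof -
  define A0 where "A0 = A \<inter> ({-pi<..<0} \<union> {0<..<pi})"
  have A0: "A0 \<in> sets borel" using A by (simp add: A0_def)
  have eq: "indicator A x = (indicator A0 x :: complex)" if "x \<in> {-pi..pi}" "x \<notin> {-pi, 0, pi}" for x
  proof -
    have "x \<in> {-pi<..<0} \<union> {0<..<pi}" using that by auto
    then show ?thesis by (simp add: A0_def indicator_def)
  qed
  have "AE x in lborel. x \<notin> {-pi, 0, pi}"
    by (intro AE_not_in finite_imp_null_set_lborel) simp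
  then have "AE x in Mpi. indicator A x = (indicator A0 x :: complex)"
    unfolding AE_Mpi_iff by eventually_elim (use eq in blast)
  moreover have "trig_approximable (indicator A0)"
    by (rule trig_approximable_indicator_away_from_0_pi[OF A0]) (simp add: A0_def)
  moreover have "indicator A \<in> borel_measurable Mpi" "indicator A0 \<in> borel_measurable Mpi"
    using A A0 by (simp_all add: measurable_Mpi)
  ultimately show ?thesis by (rule trig_approximable_AE_cong[rotated 2])
qed

lemma trig_approximable_simple_function:
  assumes s: "simple_function Mpi s"
  shows "trig_approximable s"
proof -
  define B where "B y = s -` {y} \<inter> space Mpi" for y
  define h where "h x = (\<Sum>y\<in>s ` space Mpi. y * indicator (B y) x)" for x
  have B_Mpi [measurable]: "B y \<in> sets Mpi" for y
    unfolding B_def by (rule simple_functionD(2)[OF s])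
  then have B: "B y \<in> sets borel" for y
    unfolding Mpi_def by (simp add: sets_restrict_space_iff)
  show ?thesis
  proof (rule trig_approximable_AE_cong)
    show "s \<in> borel_measurable Mpi" by (rule borel_measurable_simple_function[OF s])
    show "h \<in> borel_measurable Mpi" unfolding h_def by measurable
    have "s x = h x" if "x \<in> space Mpi" for x
    proof -
      have "s x = (\<Sum>y\<in>s ` space Mpi. indicator (B y) x *\<^sub>R y)"
        unfolding B_def by (rule simple_function_indicator_representation_banach[OF s that])
      also have "\<dots> = h x"
        unfolding h_def by (intro sum.cong refl) (simp add: indicator_def)
      finally show ?thesis .
    qed
    then show "AE x in Mpi. s x = h x" by (rule AE_I2)
    show "trig_approximable h"
      unfolding h_def
    proof (rule trig_approximable_sum[OF simple_functionD(1)[OF s]])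
      fix y
      have "square_integrable (indicator (B y))"
        by (rule square_integrable_bounded[where B=1]) (measurable, simp add: indicator_def)
      then show "square_integrable (\<lambda>x. y * indicator (B y) x) \<and> trig_approximable (\<lambda>x. y * indicator (B y) x)"
        using trig_approximable_cmult[OF trig_approximable_indicator[OF B]] square_integrable_cmult[of "indicator (B y)" y]
        by simp
    qed
  qed
qed

text \<open>Density of trigonometric polynomials: simple functions approximate \<open>g\<close> in \<open>L\<^sup>2\<close> by
  dominated convergence, and simple functions are combinations of indicators.\<close>
theorem trig_approximable_square_integrable:
  assumes g: "square_integrable g"
  shows "trig_approximable g"
proof (rule trig_approximable_limit[OF g])
  fix \<epsilon> :: real assume "0 < \<epsilon>"
  have g_measurable [measurable]: "g \<in> borel_measurable Mpi" using g by (simp add: square_integrable_def)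
  obtain F where F0: "(\<forall>i. simple_function Mpi (F i)) \<and> (\<forall>x\<in>space Mpi. (\<lambda>i. F i x) \<longlonglongrightarrow> g x) \<and>
      (\<forall>i. \<forall>x\<in>space Mpi. dist (F i x) 0 \<le> 2 * dist (g x) 0)"
    using borel_measurable_implies_sequence_metric[OF g_measurable, of 0] ..
  have F: "\<And>i. simple_function Mpi (F i)" "\<And>x. x \<in> space Mpi \<Longrightarrow> (\<lambda>i. F i x) \<longlonglongrightarrow> g x"
    "\<And>i x. x \<in> space Mpi \<Longrightarrow> cmod (F i x) \<le> 2 * cmod (g x)"
    using F0 by (simp_all add: dist_norm)
  have [measurable]: "F i \<in> borel_measurable Mpi" for i
    by (rule borel_measurable_simple_function[OF F(1)])
  have "(\<lambda>i. LINT x|Mpi. (cmod (g x - F i x))\<^sup>2) \<longlonglongrightarrow> (LINT x|Mpi. 0)"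
  proof (rule integral_dominated_convergence[where w="\<lambda>x. 9 * (cmod (g x))\<^sup>2"])
    show "integrable Mpi (\<lambda>x. 9 * (cmod (g x))\<^sup>2)"
      using g by (intro integrable_mult_right square_integrable_integrable)
    have "(\<lambda>i. (cmod (g x - F i x))\<^sup>2) \<longlonglongrightarrow> 0" if "x \<in> space Mpi" for x
    proof -
      have "(\<lambda>i. g x - F i x) \<longlonglongrightarrow> g x - g x"
        by (intro tendsto_diff tendsto_const F(2) that)
      then have "(\<lambda>i. cmod (g x - F i x)) \<longlonglongrightarrow> 0"
        by (simp add: tendsto_norm_zero)
      from tendsto_power[OF this, of 2] show ?thesis by simp
    qed
    then show "AE x in Mpi. (\<lambda>i. (cmod (g x - F i x))\<^sup>2) \<longlonglongrightarrow> 0"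
      by (intro AE_I2) simp
    have "(cmod (g x - F i x))\<^sup>2 \<le> 9 * (cmod (g x))\<^sup>2" if "x \<in> space Mpi" for i x
    proof -
      have "cmod (g x - F i x) \<le> 3 * cmod (g x)"
        using norm_triangle_ineq4[of "g x" "F i x"] F(3)[OF that, of i] by linarith
      then have "(cmod (g x - F i x))\<^sup>2 \<le> (3 * cmod (g x))\<^sup>2"
        by (intro power_mono) simp_all
      then show ?thesis by (simp add: power_mult_distrib)
    qed
    then show "\<And>i. AE x in Mpi. norm ((cmod (g x - F i x))\<^sup>2) \<le> 9 * (cmod (g x))\<^sup>2"
      by (intro AE_I2) simp
  qed measurable
  then have "(\<lambda>i. sqrt ((LINT x|Mpi. (cmod (g x - F i x))\<^sup>2) / (2 * pi))) \<longlonglongrightarrow> sqrt (0 / (2 * pi))"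
    by (intro tendsto_real_sqrt tendsto_divide tendsto_const) simp_all
  then have "(\<lambda>i. L2_norm (\<lambda>x. g x - F i x)) \<longlonglongrightarrow> 0"
    by (simp add: L2_norm_def)
  from LIMSEQ_D[OF this \<open>0 < \<epsilon>\<close>] obtain i where "norm (L2_norm (\<lambda>x. g x - F i x) - 0) < \<epsilon>"
    by blast
  then have "L2_norm (\<lambda>x. g x - F i x) < \<epsilon>"
    using L2_norm_nonneg[of "\<lambda>x. g x - F i x"] by simp
  moreover have "square_integrable (F i)"
  proof -
    have "finite (F i ` space Mpi)" by (rule simple_functionD(1)[OF F(1)])
    then obtain B where "\<forall>x\<in>space Mpi. cmod (F i x) \<le> B"
      using finite_imp_bounded[of "F i ` space Mpi"] by (auto simp: bounded_iff)
    then show ?thesis by (intro square_integrable_bounded[where B=B]) auto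
  qed
  ultimately show "\<exists>h. square_integrable h \<and> trig_approximable h \<and> L2_norm (\<lambda>x. g x - h x) < \<epsilon>"
    using trig_approximable_simple_function[OF F(1)] by blast
qed

theorem Parseval_inequality:
  assumes g: "square_integrable g"
    and summable: "(\<lambda>j. (cmod (L2_inner g (fourier_basis j)))\<^sup>2) summable_on UNIV"
  shows "L2_norm g \<le> sqrt (infsum (\<lambda>j. (cmod (L2_inner g (fourier_basis j)))\<^sup>2) UNIV)"
proof (rule field_le_epsilon)
  fix \<epsilon> :: real assume "0 < \<epsilon>"
  then have "0 < \<epsilon> / 2" by simp
  then obtain T where T: "is_trig_poly T" "L2_norm (\<lambda>x. g x - T x) < \<epsilon> / 2"
    using trig_approximable_square_integrable[OF g] unfolding trig_approximable_def by blast
  then obtain F c where F: "finite F" and T_eq: "T = trig_poly F c" unfolding is_trig_poly_def by blast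
  have sq_T: "square_integrable T" by (rule square_integrable_is_trig_poly[OF T(1)])
  define a where "a j = L2_inner g (fourier_basis j)" for j
  have "L2_norm T = L2_set (\<lambda>j. cmod (L2_inner T (fourier_basis j))) F"
    unfolding T_eq L2_norm_trig_poly[OF F] using F by (intro L2_set_cong) (simp_all add: L2_inner_trig_poly_basis)
  also have "\<dots> \<le> L2_set (\<lambda>j. cmod (a j) + cmod (L2_inner (\<lambda>x. T x - g x) (fourier_basis j))) F"
    by (intro L2_set_mono)
      (simp_all add: a_def L2_inner_diff_left[OF sq_T g square_integrable_fourier_basis] norm_triangle_sub)
  also have "\<dots> \<le> L2_set (\<lambda>j. cmod (a j)) F + L2_norm (\<lambda>x. T x - g x)"
    using L2_set_triangle_ineq[of "\<lambda>j. cmod (a j)" "\<lambda>j. cmod (L2_inner (\<lambda>x. T x - g x) (fourier_basis j))" F]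
      Bessel_inequality[OF square_integrable_diff[OF sq_T g] F] by linarith
  also have "L2_set (\<lambda>j. cmod (a j)) F \<le> sqrt (infsum (\<lambda>j. (cmod (a j))\<^sup>2) UNIV)"
    using L2_set_le_sqrt_infsum[of "\<lambda>j. cmod (a j)"] summable F by (simp add: a_def)
  finally have "L2_norm T \<le> sqrt (infsum (\<lambda>j. (cmod (a j))\<^sup>2) UNIV) + L2_norm (\<lambda>x. T x - g x)"
    by simp
  moreover have "L2_norm g \<le> L2_norm T + L2_norm (\<lambda>x. g x - T x)"
    using L2_norm_triangle[OF sq_T square_integrable_diff[OF g sq_T]] by simp
  moreover have "L2_norm (\<lambda>x. T x - g x) = L2_norm (\<lambda>x. g x - T x)"
    unfolding L2_norm_def by (simp add: norm_minus_commute)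
  ultimately show "L2_norm g \<le> sqrt (infsum (\<lambda>j. (cmod (L2_inner g (fourier_basis j)))\<^sup>2) UNIV) + \<epsilon>"
    using T(2) by (simp add: a_def)
qed

lemma cmod_exp_minus_one_squared: "(cmod (exp (\<i> * of_real x) - 1))\<^sup>2 = 2 - 2 * cos x"
proof -
  have "exp (\<i> * of_real x) - 1 = Complex (cos x - 1) (sin x)"
    by (simp add: complex_eq_iff Re_exp Im_exp)
  then have "(cmod (exp (\<i> * of_real x) - 1))\<^sup>2 = (cos x - 1)\<^sup>2 + (sin x)\<^sup>2"
    by (simp add: cmod_power2)
  also have "\<dots> = 2 - 2 * cos x"
    using sin_cos_squared_add[of x] by (simp add: power2_diff)
  finally show ?thesis .
qed

lemma cos_le_cos_if_abs_le: "\<bar>x\<bar> \<le> \<omega> \<Longrightarrow> \<omega> \<le> pi \<Longrightarrow> cos \<omega> \<le> cos x"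
  using cos_monotone_0_pi_le[of "\<bar>x\<bar>" \<omega>] by simp

lemma paley_wiener_fourier_coefficients:
  assumes "f \<in> paley_wiener \<omega>"
  obtains g where "square_integrable g" "AE x in Mpi. \<bar>x\<bar> > \<omega> \<longrightarrow> g x = 0"
    "\<And>j. L2_inner g (fourier_basis j) = f j"
proof -
  obtain g where g: "g \<in> borel_measurable lborel" "set_integrable lborel {-pi..pi} (\<lambda>\<xi>. (cmod (g \<xi>))\<^sup>2)"
    "AE \<xi> in lborel. \<xi> \<in> {-pi..pi} - {-\<omega>..\<omega>} \<longrightarrow> g \<xi> = 0"
    "\<And>j::int. f j = (1 / (2 * complex_of_real pi)) * (LINT \<xi>:{-pi..pi}|lborel. g \<xi> * exp (\<i> * of_int j * of_real \<xi>))"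
    using assms unfolding paley_wiener_def by blast
  have "square_integrable g"
    unfolding square_integrable_def integrable_Mpi_iff using g(1,2) by (simp add: measurable_Mpi)
  moreover have "AE x in Mpi. \<bar>x\<bar> > \<omega> \<longrightarrow> g x = 0"
    unfolding AE_Mpi_iff using g(3) by eventually_elim auto
  moreover have "L2_inner g (fourier_basis j) = f j" for j
    unfolding L2_inner_def fourier_basis_def g(4) integral_Mpi_eq_set_integral
    by (simp add: exp_cnj field_simps)
  ultimately show ?thesis using that by blast
qed

theorem paley_wiener_difference_bound:
  assumes f: "f \<in> paley_wiener \<omega>" and \<omega>: "0 \<le> \<omega>" "\<omega> \<le> pi" and F: "finite F"
  shows "(\<Sum>j\<in>F. (cmod (f (j + 1) - f j))\<^sup>2) \<le> (2 - 2 * cos \<omega>) * infsum (\<lambda>j. (cmod (f j))\<^sup>2) UNIV"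
proof -
  obtain g where g: "square_integrable g" and supp: "AE x in Mpi. \<bar>x\<bar> > \<omega> \<longrightarrow> g x = 0"
    and coeff: "\<And>j. L2_inner g (fourier_basis j) = f j"
    using paley_wiener_fourier_coefficients[OF f] by blast
  have summable: "(\<lambda>j. (cmod (f j))\<^sup>2) summable_on UNIV"
    using f by (simp add: paley_wiener_def ell2_int_def)
  have [measurable]: "g \<in> borel_measurable Mpi" using g by (simp add: square_integrable_def)
  define u where "u x = exp (\<i> * of_real x) * g x" for x
  define h where "h x = u x - g x" for x
  have u_measurable: "(\<lambda>x. exp (\<i> * complex_of_real x)) \<in> borel_measurable Mpi"
    by (intro measurable_Mpi) measurable
  have u: "square_integrable u"
    unfolding u_def by (rule square_integrable_bounded_mult[OF g u_measurable, where B=1]) (simp add: norm_exp_eq_Re)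
  have h: "square_integrable h"
    unfolding h_def by (rule square_integrable_diff[OF u g])
  have "L2_inner h (fourier_basis j) = f (j + 1) - f j" for j
  proof -
    have "u x * cnj (fourier_basis j x) = g x * cnj (fourier_basis (j + 1) x)" for x
      unfolding u_def fourier_basis_def by (simp add: exp_cnj algebra_simps exp_add[symmetric])
    then have "L2_inner u (fourier_basis j) = L2_inner g (fourier_basis (j + 1))"
      by (simp add: L2_inner_def)
    then show ?thesis
      unfolding h_def by (simp add: L2_inner_diff_left[OF u g square_integrable_fourier_basis] coeff)
  qed
  then have "L2_set (\<lambda>j. cmod (f (j + 1) - f j)) F \<le> L2_norm h"
    using Bessel_inequality[OF h F] by simp
  then have "(\<Sum>j\<in>F. (cmod (f (j + 1) - f j))\<^sup>2) \<le> (L2_norm h)\<^sup>2"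
    unfolding L2_set_def by (rule sqrt_le_D)
  also have "(L2_norm h)\<^sup>2 \<le> (2 - 2 * cos \<omega>) * (L2_norm g)\<^sup>2"
  proof -
    have "(LINT x|Mpi. (cmod (h x))\<^sup>2) \<le> (LINT x|Mpi. (2 - 2 * cos \<omega>) * (cmod (g x))\<^sup>2)"
    proof (rule integral_mono_AE)
      show "integrable Mpi (\<lambda>x. (cmod (h x))\<^sup>2)" by (rule square_integrable_integrable[OF h])
      show "integrable Mpi (\<lambda>x. (2 - 2 * cos \<omega>) * (cmod (g x))\<^sup>2)"
        by (intro integrable_mult_right square_integrable_integrable[OF g])
      show "AE x in Mpi. (cmod (h x))\<^sup>2 \<le> (2 - 2 * cos \<omega>) * (cmod (g x))\<^sup>2"
        using supp
      proof eventually_elim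
        case (elim x)
        have "h x = (exp (\<i> * of_real x) - 1) * g x" by (simp add: h_def u_def algebra_simps)
        then have hx: "(cmod (h x))\<^sup>2 = (2 - 2 * cos x) * (cmod (g x))\<^sup>2"
          by (simp add: norm_mult power_mult_distrib cmod_exp_minus_one_squared)
        show ?case
        proof (cases "\<bar>x\<bar> \<le> \<omega>")
          case True
          then have "2 - 2 * cos x \<le> 2 - 2 * cos \<omega>" using cos_le_cos_if_abs_le[OF _ \<omega>(2)] by simp
          then show ?thesis unfolding hx by (rule mult_right_mono) simp
        next
          case False
          then show ?thesis using elim by (simp add: hx)
        qed
      qed
    qed
    then show ?thesis
      unfolding L2_norm_square by (simp add: divide_right_mono)
  qed
  also have "\<dots> \<le> (2 - 2 * cos \<omega>) * infsum (\<lambda>j. (cmod (f j))\<^sup>2) UNIV"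
  proof (rule mult_left_mono)
    have "L2_norm g \<le> sqrt (infsum (\<lambda>j. (cmod (f j))\<^sup>2) UNIV)"
      using Parseval_inequality[OF g] summable by (simp add: coeff)
    then show "(L2_norm g)\<^sup>2 \<le> infsum (\<lambda>j. (cmod (f j))\<^sup>2) UNIV"
      using L2_norm_nonneg[of g] by (metis power_mono real_sqrt_pow2 infsum_nonneg zero_le_power2)
  qed (use cos_le_one[of \<omega>] in simp)
  finally show ?thesis .
qed

lemma ratio_le_one_plus_four_times:
  fixes a :: real
  assumes "0 \<le> a" "a < 1 / 2"
  shows "(1 + a) / (1 - a) \<le> 1 + 4 * a"
proof -
  have "a * a \<le> a * (1 / 2)" using assms by (intro mult_left_mono) auto
  then have "1 + a \<le> (1 + 4 * a) * (1 - a)" by (simp add: algebra_simps)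
  then show ?thesis using assms by (simp add: divide_le_eq)
qed

theorem corollary5p2:
  fixes k :: int and \<omega> :: real
  assumes "k > 0" and "odd k" and "0 \<le> \<omega>" and "\<omega> \<le> pi"
  shows "((real_of_int k + 1) / 2 * sqrt (2 - 2 * cos \<omega>) < 1 \<longrightarrow>
           (\<forall>f \<in> paley_wiener \<omega>.
              (1 - (real_of_int k + 1) / 2 * sqrt (2 - 2 * cos \<omega>)) / sqrt (real_of_int k)
                * l2norm_on UNIV f
              \<le> l2norm_on ((\<lambda>m. k * m) ` UNIV) f
            \<and> l2norm_on ((\<lambda>m. k * m) ` UNIV) f
              \<le> (1 + (real_of_int k + 1) / 2 * sqrt (2 - 2 * cos \<omega>)) / sqrt (real_of_int k)
                * l2norm_on UNIV f))
       \<and> ((real_of_int k + 1) * sqrt (2 - 2 * cos \<omega>) < 1 \<longrightarrow>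
           ((1 + (real_of_int k + 1) / 2 * sqrt (2 - 2 * cos \<omega>)) / sqrt (real_of_int k))
           / ((1 - (real_of_int k + 1) / 2 * sqrt (2 - 2 * cos \<omega>)) / sqrt (real_of_int k))
           \<le> 1 + 2 * (real_of_int k + 1) * sqrt (2 - 2 * cos \<omega>))"
proof -
  define s where "s = sqrt (2 - 2 * cos \<omega>)"
  define a where "a = (real_of_int k + 1) / 2 * s"
  obtain R where "k = 2 * R + 1" using \<open>odd k\<close> by (rule oddE)
  moreover have "0 \<le> R" using \<open>k > 0\<close> calculation by linarith
  ultimately have R: "k = 2 * R + 1" "0 \<le> R" by simp_all
  have "0 \<le> s" "0 < sqrt k" using assms(1) by (simp_all add: s_def)
  have "real_of_int R \<le> (real_of_int k + 1) / 2" using R by simp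
  then have Rs: "R * s \<le> a" unfolding a_def using \<open>0 \<le> s\<close> by (rule mult_right_mono)
  have "(1 - a) / sqrt k * l2norm_on UNIV f \<le> l2norm_on (range (\<lambda>m. k * m)) f
        \<and> l2norm_on (range (\<lambda>m. k * m)) f \<le> (1 + a) / sqrt k * l2norm_on UNIV f"
    if f: "f \<in> paley_wiener \<omega>" for f
  proof -
    have "s\<^sup>2 = 2 - 2 * cos \<omega>" using cos_le_one[of \<omega>] by (simp add: s_def)
    then have "\<bar>sqrt k * l2norm_on (range (\<lambda>m. k * m)) f - l2norm_on UNIV f\<bar>
                 \<le> R * sqrt (s\<^sup>2 * infsum (\<lambda>j. (cmod (f j))\<^sup>2) UNIV)"
      using f paley_wiener_difference_bound[OF f assms(3,4)]
      by (intro sampling_estimate[OF _ R]) (simp_all add: paley_wiener_def ell2_int_def)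
    also have "\<dots> = R * s * l2norm_on UNIV f"
      using \<open>0 \<le> s\<close> by (simp add: l2norm_on_def real_sqrt_mult)
    also have "\<dots> \<le> a * l2norm_on UNIV f"
      using Rs by (rule mult_right_mono) (simp add: l2norm_on_def infsum_nonneg)
    finally show ?thesis
      using \<open>0 < sqrt k\<close> by (simp add: field_simps abs_le_iff)
  qed
  moreover have "((1 + a) / sqrt k) / ((1 - a) / sqrt k) \<le> 1 + 2 * (real_of_int k + 1) * s"
    if "(real_of_int k + 1) * s < 1"
  proof -
    have "((1 + a) / sqrt k) / ((1 - a) / sqrt k) = (1 + a) / (1 - a)"
      using \<open>0 < sqrt k\<close> by simp
    also have "\<dots> \<le> 1 + 4 * a"
      using that \<open>0 \<le> s\<close> assms(1) by (intro ratio_le_one_plus_four_times) (simp_all add: a_def)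
    also have "\<dots> = 1 + 2 * (real_of_int k + 1) * s" by (simp add: a_def)
    finally show ?thesis .
  qed
  ultimately show ?thesis unfolding a_def s_def by blast
qed

end
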